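(* Let $1\le a\le b\le c$ be integers with $a<c$, $K=K_{a,b,c}$ and $k=a+b+c$. Let $K_1,K_2$ be vertex-disjoint copies of $K$ and $u$ a vertex not in $V(K_1)\cup V(K_2)$. Then for every $3$-graph $L\in\mathcal L_2(K_1,K_2,u)$ there exists a fractional hom$(K)$-tiling $h$ of $L$ with $w(h)\ge 2k+\frac1{abc^2}$ and $h_{\min}\ge\frac1{bc^2}$.
   Context: $K_{a,b,c}$ is the complete $3$-partite $3$-graph with parts of sizes $a,b,c$. $\mathcal L_2(K_1,K_2,u)$ is the family of all $3$-graphs on vertex set $\{u\}\cup V(K_1)\cup V(K_2)$ whose edge set contains $E(K_1)\cup E(K_2)$ and at least $\max\{a^2+2a(b+c),(a+b)^2\}+1$ triples $uvw$ with $v\in V(K_1)$ and $w\in V(K_2)$. For a $3$-graph $G=(V,E)$, a function $h:V\times E\to[0,1]$ is a fractional hom$(K)$-tiling of $G$ if (1) $h(v,e)=0$ whenever $v\notin e$; (2) $\sum_{e\in E}h(v,e)\le1$ for all $v\in V$; (3) every $e\in E$ has a labeling $e=xyz$ with $h(x,e)\le h(y,e)\le h(z,e)$ and $\frac{h(x,e)}a\ge\frac{h(y,e)}b\ge\frac{h(z,e)}c$. $h_{\min}$ is the smallest nonzero value of $h(v,e)$ and $w(h)=\sum_{(v,e)\in V\times E}h(v,e)$. *)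

theory Defs
  imports Main "HOL.Real"
begin

text \<open>3-graphs are given by a vertex set V and an edge set E of 3-element subsets of V.\<close>

definition complete3partite :: "'v set \<Rightarrow> 'v set \<Rightarrow> 'v set \<Rightarrow> 'v set set" where
  "complete3partite A B C = {{x, y, z} | x y z. x \<in> A \<and> y \<in> B \<and> z \<in> C}"

definition is_copy_K :: "nat \<Rightarrow> nat \<Rightarrow> nat \<Rightarrow> 'v set \<Rightarrow> 'v set set \<Rightarrow> bool" where
  "is_copy_K a b c V E \<longleftrightarrow>
     (\<exists>A B C. finite A \<and> finite B \<and> finite C \<and>
        card A = a \<and> card B = b \<and> card C = c \<and>
        A \<inter> B = {} \<and> A \<inter> C = {} \<and> B \<inter> C = {} \<and>
        V = A \<union> B \<union> C \<and> E = complete3partite A B C)"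

definition in_L2 :: "nat \<Rightarrow> nat \<Rightarrow> nat \<Rightarrow> 'v set \<Rightarrow> 'v set set \<Rightarrow> 'v set \<Rightarrow> 'v set set \<Rightarrow> 'v
                     \<Rightarrow> 'v set set \<Rightarrow> bool" where
  "in_L2 a b c V1 E1 V2 E2 u E \<longleftrightarrow>
     E \<subseteq> {e. e \<subseteq> insert u (V1 \<union> V2) \<and> card e = 3} \<and>
     E1 \<union> E2 \<subseteq> E \<and>
     card {e \<in> E. \<exists>v\<in>V1. \<exists>w\<in>V2. e = {u, v, w}}
       \<ge> max (a^2 + 2*a*(b+c)) ((a+b)^2) + 1"

definition frac_hom_tiling :: "nat \<Rightarrow> nat \<Rightarrow> nat \<Rightarrow> 'v set \<Rightarrow> 'v set set \<Rightarrow> ('v \<Rightarrow> 'v set \<Rightarrow> real) \<Rightarrow> bool" where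
  "frac_hom_tiling a b c V E h \<longleftrightarrow>
     (\<forall>v\<in>V. \<forall>e\<in>E. 0 \<le> h v e \<and> h v e \<le> 1) \<and>
     (\<forall>v\<in>V. \<forall>e\<in>E. v \<notin> e \<longrightarrow> h v e = 0) \<and>
     (\<forall>v\<in>V. (\<Sum>e\<in>E. h v e) \<le> 1) \<and>
     (\<forall>e\<in>E. \<exists>x y z. e = {x, y, z} \<and> x \<noteq> y \<and> x \<noteq> z \<and> y \<noteq> z \<and>
        h x e \<le> h y e \<and> h y e \<le> h z e \<and>
        h x e / real a \<ge> h y e / real b \<and> h y e / real b \<ge> h z e / real c)"

definition tiling_weight :: "'v set \<Rightarrow> 'v set set \<Rightarrow> ('v \<Rightarrow> 'v set \<Rightarrow> real) \<Rightarrow> real" where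
  "tiling_weight V E h = (\<Sum>v\<in>V. \<Sum>e\<in>E. h v e)"

definition tiling_hmin :: "'v set \<Rightarrow> 'v set set \<Rightarrow> ('v \<Rightarrow> 'v set \<Rightarrow> real) \<Rightarrow> real" where
  "tiling_hmin V E h = Min {h v e | v e. v \<in> V \<and> e \<in> E \<and> h v e \<noteq> 0}"

end

theory Submission
  imports Defs
begin

text \<open>
  In the standard tiling every vertex of a part of size a, b or c of either copy carries the weight
  a s, b s or c s on each of its edges, where s = 1/(a b c): every vertex then has load exactly 1, every
  copy edge is labelled in the order of its parts, and the total weight is 2k.  The many triples through
  u force one of a few patterns of crossing edges, depending on whether a < b < c, a = b or b = c.  For
  each pattern the weights of one or two copy edges at the endpoints are lowered and weights are put
  on the crossing edges instead, so that all loads stay at most 1, all labellings stay admissible, all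
  weights stay at least \<mu> = 1/(b c^2), and the total weight grows by at least s/c = 1/(a b c^2).
\<close>

section \<open>Labellings and complete 3-partite edges\<close>

definition ratio_ordered :: "nat \<Rightarrow> nat \<Rightarrow> nat \<Rightarrow> real \<Rightarrow> real \<Rightarrow> real \<Rightarrow> bool" where
  "ratio_ordered a b c x y z \<longleftrightarrow>
     x \<le> y \<and> y \<le> z \<and> y / real b \<le> x / real a \<and> z / real c \<le> y / real b"

definition hom_admissible :: "nat \<Rightarrow> nat \<Rightarrow> nat \<Rightarrow> real \<Rightarrow> real \<Rightarrow> real \<Rightarrow> bool" where
  "hom_admissible a b c p q r \<longleftrightarrow>
     ratio_ordered a b c p q r \<or> ratio_ordered a b c p r q \<or> ratio_ordered a b c q p r \<or>
     ratio_ordered a b c q r p \<or> ratio_ordered a b c r p q \<or> ratio_ordered a b c r q p"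

lemma hom_admissible_labelling:
  assumes "hom_admissible a b c (f x) (f y) (f z)" "e = {x, y, z}" "x \<noteq> y" "x \<noteq> z" "y \<noteq> z"
  shows "\<exists>x y z. e = {x, y, z} \<and> x \<noteq> y \<and> x \<noteq> z \<and> y \<noteq> z \<and>
     f x \<le> f y \<and> f y \<le> f z \<and> f x / real a \<ge> f y / real b \<and> f y / real b \<ge> f z / real c"
proof -
  have labelled: "\<exists>x y z. e = {x, y, z} \<and> x \<noteq> y \<and> x \<noteq> z \<and> y \<noteq> z \<and>
     f x \<le> f y \<and> f y \<le> f z \<and> f x / real a \<ge> f y / real b \<and> f y / real b \<ge> f z / real c"
    if "ratio_ordered a b c (f p) (f q) (f r)" "e = {p, q, r}" "p \<noteq> q" "p \<noteq> r" "q \<noteq> r"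
    for p q r
    using that unfolding ratio_ordered_def by blast
  show ?thesis
    using assms unfolding hom_admissible_def
    by (elim disjE) (erule labelled; auto simp: insert_commute)+
qed

lemma complete3partite_swap12: "complete3partite A B C = complete3partite B A C"
  unfolding complete3partite_def by (auto simp: insert_commute)

lemma complete3partite_swap23: "complete3partite A B C = complete3partite A C B"
  unfolding complete3partite_def by (auto simp: insert_commute)

lemma complete3partite_subset: "e \<in> complete3partite A B C \<Longrightarrow> e \<subseteq> A \<union> B \<union> C"
  unfolding complete3partite_def by auto

lemma finite_complete3partite:
  assumes "finite A" "finite B" "finite C"
  shows "finite (complete3partite A B C)"
proof -
  have "complete3partite A B C = (\<lambda>(x, y, z). {x, y, z}) ` (A \<times> B \<times> C)"
    unfolding complete3partite_def by auto
  then show ?thesis using assms by simp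
qed

lemma complete3partiteE:
  assumes "e \<in> complete3partite A B C"
  obtains x y z where "e = {x, y, z}" "x \<in> A" "y \<in> B" "z \<in> C"
  using assms unfolding complete3partite_def by auto

lemma complete3partiteI: "x \<in> A \<Longrightarrow> y \<in> B \<Longrightarrow> z \<in> C \<Longrightarrow> {x, y, z} \<in> complete3partite A B C"
  unfolding complete3partite_def by auto

lemma complete3partite_labels_unique:
  assumes "{x, y, z} = {x', y', z'}" "x \<in> A" "x' \<in> A" "y \<in> B" "y' \<in> B" "z \<in> C" "z' \<in> C"
    "A \<inter> B = {}" "A \<inter> C = {}" "B \<inter> C = {}"
  shows "x = x' \<and> y = y' \<and> z = z'"
proof -
  have "x \<in> {x', y', z'}" "y \<in> {x', y', z'}" "z \<in> {x', y', z'}" using assms(1) by auto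
  then show ?thesis using assms(2-) by blast
qed

lemma card_complete3partite_edges_at:
  assumes "finite B" "finite C" "A \<inter> B = {}" "A \<inter> C = {}" "B \<inter> C = {}" "v \<in> A"
  shows "card {e \<in> complete3partite A B C. v \<in> e} = card B * card C"
proof -
  have "v \<notin> B" "v \<notin> C" using assms by auto
  have "{e \<in> complete3partite A B C. v \<in> e} = (\<lambda>(y, z). {v, y, z}) ` (B \<times> C)"
    using assms unfolding complete3partite_def by auto
  moreover have "inj_on (\<lambda>(y, z). {v, y, z}) (B \<times> C)"
    using \<open>v \<notin> B\<close> \<open>v \<notin> C\<close> assms(5)
    by (intro inj_onI) (auto simp: doubleton_eq_iff insert_eq_iff)
  ultimately show ?thesis
    using assms(1,2) by (simp add: card_image card_cartesian_product)
qed

lemma apex_triangle_eq: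
  assumes "{u, v, w} = {u, v', w'}" "v \<in> X" "v' \<in> X" "w \<in> Y" "w' \<in> Y" "X \<inter> Y = {}"
    "u \<notin> X" "u \<notin> Y"
  shows "v = v' \<and> w = w'"
proof -
  have "v \<in> {u, v', w'}" "w \<in> {u, v', w'}" using assms(1) by auto
  then show ?thesis using assms by auto
qed

lemma sum_incidences:
  assumes "finite V" "\<forall>e\<in>M. e \<subseteq> V"
  shows "(\<Sum>v\<in>V. \<Sum>e\<in>M. if v \<in> e then f e v else 0) = (\<Sum>e\<in>M. \<Sum>v\<in>e. f e v)"
proof -
  have "(\<Sum>v\<in>V. if v \<in> e then f e v else 0) = (\<Sum>v\<in>e. f e v)" if "e \<in> M" for e
    using sum.inter_restrict[OF assms(1), of "f e" e] assms(2) that by (simp add: Int_absorb1)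
  then show ?thesis by (subst sum.swap) simp
qed

lemma sum_fibres:
  assumes "finite V" "g ` Q \<subseteq> V"
  shows "(\<Sum>v\<in>V. \<Sum>q\<in>Q. if g q = v then f q else 0) = (\<Sum>q\<in>Q. f q)"
  using assms by (subst sum.swap) (auto intro!: sum.cong simp: sum.delta)

section \<open>The standard tiling of two copies\<close>

definition unit_weight :: "nat \<Rightarrow> nat \<Rightarrow> nat \<Rightarrow> real" where
  "unit_weight a b c = 1 / (real a * real b * real c)"

definition min_weight :: "nat \<Rightarrow> nat \<Rightarrow> nat \<Rightarrow> real" where
  "min_weight a b c = real a * unit_weight a b c / real c"

definition standard_weight :: "nat \<Rightarrow> nat \<Rightarrow> nat \<Rightarrow> 'v set \<Rightarrow> 'v set \<Rightarrow> 'v \<Rightarrow> real" where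
  "standard_weight a b c A B v =
     (if v \<in> A then real a else if v \<in> B then real b else real c) * unit_weight a b c"

definition has_good_tiling :: "nat \<Rightarrow> nat \<Rightarrow> nat \<Rightarrow> 'v set \<Rightarrow> 'v set set \<Rightarrow> bool" where
  "has_good_tiling a b c V E \<longleftrightarrow> (\<exists>h. frac_hom_tiling a b c V E h \<and>
     tiling_weight V E h \<ge> 2 * real (a + b + c) + 1 / (real a * real b * real c ^ 2) \<and>
     tiling_hmin V E h \<ge> 1 / (real b * real c ^ 2))"

locale two_copies =
  fixes a b c :: nat and A1 B1 C1 A2 B2 C2 :: "'v set" and u :: 'v and E :: "'v set set"
  assumes finite_parts: "finite A1" "finite B1" "finite C1" "finite A2" "finite B2" "finite C2"
    and card_parts: "card A1 = a" "card B1 = b" "card C1 = c" "card A2 = a" "card B2 = b" "card C2 = c"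
    and disjoint1: "A1 \<inter> B1 = {}" "A1 \<inter> C1 = {}" "B1 \<inter> C1 = {}"
    and disjoint2: "A2 \<inter> B2 = {}" "A2 \<inter> C2 = {}" "B2 \<inter> C2 = {}"
    and disjoint_copies: "(A1 \<union> B1 \<union> C1) \<inter> (A2 \<union> B2 \<union> C2) = {}"
    and apex: "u \<notin> A1 \<union> B1 \<union> C1" "u \<notin> A2 \<union> B2 \<union> C2"
    and sizes: "1 \<le> a" "a \<le> b" "b \<le> c" "a < c"
    and edges: "E \<subseteq> {e. e \<subseteq> insert u ((A1 \<union> B1 \<union> C1) \<union> (A2 \<union> B2 \<union> C2)) \<and> card e = 3}"
    and copies_in_E: "complete3partite A1 B1 C1 \<subseteq> E" "complete3partite A2 B2 C2 \<subseteq> E"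
begin

abbreviation "V1 \<equiv> A1 \<union> B1 \<union> C1"
abbreviation "V2 \<equiv> A2 \<union> B2 \<union> C2"
abbreviation "E1 \<equiv> complete3partite A1 B1 C1"
abbreviation "E2 \<equiv> complete3partite A2 B2 C2"
abbreviation "s \<equiv> unit_weight a b c"
abbreviation "std \<equiv> standard_weight a b c (A1 \<union> A2) (B1 \<union> B2)"
abbreviation "\<mu> \<equiv> min_weight a b c"

lemma swap_copies: "two_copies a b c A2 B2 C2 A1 B1 C1 u E"
  using finite_parts card_parts disjoint1 disjoint2 disjoint_copies apex sizes edges copies_in_E
  by unfold_locales auto

lemma finite_V1: "finite V1" and finite_V2: "finite V2"
  using finite_parts by auto

lemma finite_E: "finite E"
proof -
  have "E \<subseteq> Pow (insert u (V1 \<union> V2))" using edges by auto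
  then show ?thesis using finite_V1 finite_V2 finite_subset by blast
qed

lemma card_V1: "card V1 = a + b + c" and card_V2: "card V2 = a + b + c"
  using finite_parts card_parts disjoint1 disjoint2 by (simp_all add: card_Un_disjoint Int_Un_distrib2)

lemma sizes_real: "real a \<ge> 1" "real b \<ge> real a" "real c \<ge> real b" "real c \<ge> real a + 1"
  "real c \<ge> 2" "s > 0" "real a * real b * real c * s = 1"
  using sizes by (auto simp: unit_weight_def)

lemma std_A: "v \<in> A1 \<union> A2 \<Longrightarrow> std v = real a * s"
  and std_B: "v \<in> B1 \<union> B2 \<Longrightarrow> std v = real b * s"
  and std_C: "v \<in> C1 \<union> C2 \<Longrightarrow> std v = real c * s"
  using disjoint1 disjoint2 disjoint_copies by (auto simp: standard_weight_def)

lemma mu_eq: "\<mu> = 1 / (real b * real c ^ 2)"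
  using sizes_real by (simp add: min_weight_def unit_weight_def power2_eq_square field_simps)

lemma std_bounds: "0 < \<mu>" "\<mu> \<le> std v" "std v \<le> 1"
proof -
  have s: "real a * s = 1 / (real b * real c)" "real b * s = 1 / (real a * real c)"
    "real c * s = 1 / (real a * real b)"
    using sizes_real by (simp_all add: unit_weight_def)
  have "1 * 1 \<le> real b * real c" "1 * 1 \<le> real a * real c" "1 * 1 \<le> real a * real b"
    using sizes_real by (intro mult_mono; linarith)+
  then have "real a * s \<le> 1" "real b * s \<le> 1" "real c * s \<le> 1"
    unfolding s by simp_all
  moreover have "\<mu> \<le> real a * s" "real a * s \<le> real b * s" "real b * s \<le> real c * s"
    using sizes_real by (simp_all add: min_weight_def divide_le_eq mult_right_mono)
  ultimately show "\<mu> \<le> std v" "std v \<le> 1"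
    unfolding standard_weight_def by (simp_all split: if_split)
  show "0 < \<mu>" using sizes_real by (simp add: min_weight_def)
qed

lemma std_ratio_ordered:
  "x \<in> A1 \<union> A2 \<Longrightarrow> y \<in> B1 \<union> B2 \<Longrightarrow> z \<in> C1 \<union> C2 \<Longrightarrow> ratio_ordered a b c (std x) (std y) (std z)"
  using std_A std_B std_C sizes_real unfolding ratio_ordered_def
  by (simp add: mult_right_mono)

lemma standard_load_copy:
  assumes "finite A" "finite B" "finite C" "A \<inter> B = {}" "A \<inter> C = {}" "B \<inter> C = {}"
    "card A = a" "card B = b" "card C = c"
    and "\<forall>v\<in>A. std v = real a * s" "\<forall>v\<in>B. std v = real b * s" "\<forall>v\<in>C. std v = real c * s"
    and "v \<in> A \<union> B \<union> C"
  shows "(\<Sum>e\<in>complete3partite A B C. if v \<in> e then std v else 0) = 1"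
proof -
  have "finite (complete3partite A B C)"
    using assms(1-3) by (rule finite_complete3partite)
  then have "(\<Sum>e\<in>complete3partite A B C. if v \<in> e then std v else 0)
      = (\<Sum>e\<in>{e \<in> complete3partite A B C. v \<in> e}. std v)"
    by (rule sum.inter_filter[symmetric])
  also have "\<dots> = real (card {e \<in> complete3partite A B C. v \<in> e}) * std v"
    by simp
  also have "\<dots> = 1"
  proof -
    have "complete3partite A B C = complete3partite B A C" "complete3partite A B C = complete3partite C A B"
      by (metis complete3partite_swap12 complete3partite_swap23)+
    moreover have "real a * real b * real c * s = 1" by (fact sizes_real(7))
    ultimately consider "card {e \<in> complete3partite A B C. v \<in> e} = b * c" "std v = real a * s"
      | "card {e \<in> complete3partite A B C. v \<in> e} = a * c" "std v = real b * s"
      | "card {e \<in> complete3partite A B C. v \<in> e} = a * b" "std v = real c * s"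
      using assms card_complete3partite_edges_at[of B C A v] card_complete3partite_edges_at[of A C B v]
        card_complete3partite_edges_at[of A B C v]
      by (auto simp: Int_commute)
    then show ?thesis
      using sizes_real(7) by cases (simp_all add: mult_ac)
  qed
  finally show ?thesis .
qed

lemma standard_load:
  "v \<in> V1 \<Longrightarrow> (\<Sum>e\<in>E1. if v \<in> e then std v else 0) = 1"
  "v \<in> V2 \<Longrightarrow> (\<Sum>e\<in>E2. if v \<in> e then std v else 0) = 1"
  by (rule standard_load_copy; use finite_parts card_parts disjoint1 disjoint2 std_A std_B std_C in auto)+

lemma edge_E1_sub: "e \<in> E1 \<Longrightarrow> e \<subseteq> V1" and edge_E2_sub: "e \<in> E2 \<Longrightarrow> e \<subseteq> V2"
  by (simp_all add: complete3partite_subset)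

lemma copy_edges_disjoint: "E1 \<inter> E2 = {}"
proof -
  have "e \<noteq> {}" if "e \<in> E1" for e using that by (auto elim: complete3partiteE)
  then show ?thesis using edge_E1_sub edge_E2_sub disjoint_copies by blast
qed

end

section \<open>Moving weight onto crossing edges\<close>

definition admissible_cross :: "nat \<Rightarrow> nat \<Rightarrow> nat \<Rightarrow> real \<Rightarrow> real \<Rightarrow> real \<Rightarrow> bool" where
  "admissible_cross a b c p q r \<longleftrightarrow>
     min_weight a b c \<le> p \<and> p \<le> 1 \<and>
     min_weight a b c \<le> q \<and> q \<le> 1 \<and>
     min_weight a b c \<le> r \<and> r \<le> 1 \<and> hom_admissible a b c p q r"

context two_copies
begin

text \<open>
  The edges MA of the first copy and MB of the second copy lose dA and dB from their standard
  weights; each pair (v, w) in Q stands for the crossing edge {u, v, w}, which receives the weights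
  PU, PV and PW at u, v and w.
\<close>

context
  fixes MA MB :: "'v set set" and dA dB :: "'v set \<Rightarrow> 'v \<Rightarrow> real"
    and Q :: "('v \<times> 'v) set" and PU PV PW :: "'v \<times> 'v \<Rightarrow> real"
  assumes reduced_edges: "MA \<subseteq> E1" "MB \<subseteq> E2"
    and finite_Q: "finite Q" and Q_sub: "Q \<subseteq> V1 \<times> V2"
    and cross_edges: "\<forall>q\<in>Q. {u, fst q, snd q} \<in> E"
    and reduced_admissible1: "\<forall>e\<in>MA. \<forall>x\<in>A1. \<forall>y\<in>B1. \<forall>z\<in>C1. e = {x, y, z} \<longrightarrow>
        hom_admissible a b c (std x - dA e x) (std y - dA e y) (std z - dA e z)"
    and reduced_admissible2: "\<forall>e\<in>MB. \<forall>x\<in>A2. \<forall>y\<in>B2. \<forall>z\<in>C2. e = {x, y, z} \<longrightarrow>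
        hom_admissible a b c (std x - dB e x) (std y - dB e y) (std z - dB e z)"
    and reduced_bounds1: "\<forall>e\<in>MA. \<forall>v\<in>e. 0 \<le> dA e v \<and> \<mu> \<le> std v - dA e v"
    and reduced_bounds2: "\<forall>e\<in>MB. \<forall>v\<in>e. 0 \<le> dB e v \<and> \<mu> \<le> std v - dB e v"
    and cross_bounds: "\<forall>q\<in>Q. admissible_cross a b c (PU q) (PV q) (PW q)"
    and freed1: "\<forall>v\<in>V1. (\<Sum>q\<in>Q. if fst q = v then PV q else 0)
      \<le> (\<Sum>e\<in>MA. if v \<in> e then dA e v else 0)"
    and freed2: "\<forall>w\<in>V2. (\<Sum>q\<in>Q. if snd q = w then PW q else 0)
      \<le> (\<Sum>e\<in>MB. if w \<in> e then dB e w else 0)"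
    and apex_load: "(\<Sum>q\<in>Q. PU q) \<le> 1"
    and gain: "(\<Sum>q\<in>Q. PU q + PV q + PW q) - (\<Sum>e\<in>MA. \<Sum>v\<in>e. dA e v)
        - (\<Sum>e\<in>MB. \<Sum>v\<in>e. dB e v) \<ge> s / real c"
begin

definition reduction :: "'v set \<Rightarrow> 'v \<Rightarrow> real" where
  "reduction e v = (if e \<in> MA then dA e v else if e \<in> MB then dB e v else 0)"

definition cross_value :: "'v \<Rightarrow> 'v \<times> 'v \<Rightarrow> real" where
  "cross_value v q = (if v = u then PU q else if v = fst q then PV q else if v = snd q then PW q else 0)"

definition tiling :: "'v \<Rightarrow> 'v set \<Rightarrow> real" where
  "tiling v e = (if e \<in> E1 \<union> E2 \<and> v \<in> e then std v - reduction e v else 0)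
     + (\<Sum>q\<in>Q. if e = {u, fst q, snd q} then cross_value v q else 0)"

lemma cross_edge_not_in_copies: "q \<in> Q \<Longrightarrow> {u, fst q, snd q} \<notin> E1 \<union> E2"
  using edge_E1_sub edge_E2_sub apex by blast

lemma cross_pair_distinct:
  assumes "q \<in> Q"
  shows "u \<noteq> fst q \<and> u \<noteq> snd q \<and> fst q \<noteq> snd q"
proof -
  have "fst q \<in> V1" "snd q \<in> V2" using assms Q_sub by auto
  moreover have "u \<notin> V1" "u \<notin> V2" using apex by simp_all
  ultimately show ?thesis using disjoint_copies by (metis disjoint_iff)
qed

lemma cross_edge_inj:
  assumes "q \<in> Q" "q' \<in> Q" "{u, fst q, snd q} = {u, fst q', snd q'}"
  shows "q = q'"
proof -
  have "fst q \<in> V1" "fst q' \<in> V1" "snd q \<in> V2" "snd q' \<in> V2" using assms(1,2) Q_sub by auto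
  then show ?thesis
    using apex_triangle_eq[OF assms(3), of V1 V2] disjoint_copies apex by (simp add: prod_eq_iff)
qed

lemma tiling_copy_edge: "e \<in> E1 \<union> E2 \<Longrightarrow> tiling v e = (if v \<in> e then std v - reduction e v else 0)"
  using cross_edge_not_in_copies unfolding tiling_def by (auto intro!: sum.neutral)

lemma tiling_cross_edge:
  assumes "q \<in> Q"
  shows "tiling v {u, fst q, snd q} = cross_value v q"
proof -
  have "(\<Sum>q'\<in>Q. if {u, fst q, snd q} = {u, fst q', snd q'} then cross_value v q' else 0)
      = (\<Sum>q'\<in>Q. if q = q' then cross_value v q' else 0)"
    using cross_edge_inj assms by (intro sum.cong) auto
  then show ?thesis
    using cross_edge_not_in_copies[OF assms] assms finite_Q unfolding tiling_def by simp
qed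

lemma tiling_other_edge:
  "e \<notin> E1 \<union> E2 \<Longrightarrow> \<forall>q\<in>Q. e \<noteq> {u, fst q, snd q} \<Longrightarrow> tiling v e = 0"
  unfolding tiling_def by (auto intro!: sum.neutral)

lemma edge_cases:
  obtains "e \<in> E1 \<union> E2" | q where "q \<in> Q" "e = {u, fst q, snd q}"
    | "e \<notin> E1 \<union> E2" "\<forall>q\<in>Q. e \<noteq> {u, fst q, snd q}"
  by blast

lemma cross_load: "(\<Sum>e\<in>E. \<Sum>q\<in>Q. if e = {u, fst q, snd q} then cross_value v q else 0)
    = (\<Sum>q\<in>Q. cross_value v q)"
  using finite_E cross_edges by (subst sum.swap) (simp add: sum.delta')

lemma copy_load:
  assumes "M \<subseteq> F" "F \<subseteq> E" "F \<subseteq> E1 \<union> E2" "(\<Sum>e\<in>F. if v \<in> e then std v else 0) = 1"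
    and "\<forall>e\<in>E. e \<in> E1 \<union> E2 \<and> v \<in> e \<longrightarrow> e \<in> F"
    and "\<forall>e\<in>F. reduction e v = (if e \<in> M then d e v else 0)"
  shows "(\<Sum>e\<in>E. if e \<in> E1 \<union> E2 \<and> v \<in> e then std v - reduction e v else 0)
    = 1 - (\<Sum>e\<in>M. if v \<in> e then d e v else 0)"
proof -
  have "(\<Sum>e\<in>E. if e \<in> E1 \<union> E2 \<and> v \<in> e then std v - reduction e v else 0)
      = (\<Sum>e\<in>E. if e \<in> F then (if v \<in> e then std v else 0) else 0)
        - (\<Sum>e\<in>E. if e \<in> M then (if v \<in> e then d e v else 0) else 0)"
    using assms(1,3,5,6) by (subst sum_subtractf[symmetric]) (rule sum.cong; auto)
  also have "\<dots> = 1 - (\<Sum>e\<in>M. if v \<in> e then d e v else 0)"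
    using assms(1,2,4) finite_E by (simp add: sum.inter_restrict[symmetric] Int_absorb1)
  finally show ?thesis .
qed

lemma load_V1:
  assumes "v \<in> V1"
  shows "(\<Sum>e\<in>E. tiling v e) = 1 - (\<Sum>e\<in>MA. if v \<in> e then dA e v else 0)
    + (\<Sum>q\<in>Q. if fst q = v then PV q else 0)"
proof -
  have "v \<noteq> u" "\<forall>q\<in>Q. v \<noteq> snd q" using assms apex Q_sub disjoint_copies by auto
  then have "cross_value v q = (if fst q = v then PV q else 0)" if "q \<in> Q" for q
    using that unfolding cross_value_def by auto
  moreover have "(\<Sum>e\<in>E. if e \<in> E1 \<union> E2 \<and> v \<in> e then std v - reduction e v else 0)
      = 1 - (\<Sum>e\<in>MA. if v \<in> e then dA e v else 0)"
  proof (rule copy_load)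
    show "MA \<subseteq> E1" "E1 \<subseteq> E" "E1 \<subseteq> E1 \<union> E2" using reduced_edges copies_in_E by auto
    show "(\<Sum>e\<in>E1. if v \<in> e then std v else 0) = 1" using standard_load(1) assms .
    show "\<forall>e\<in>E. e \<in> E1 \<union> E2 \<and> v \<in> e \<longrightarrow> e \<in> E1"
      using assms edge_E2_sub disjoint_copies by blast
    show "\<forall>e\<in>E1. reduction e v = (if e \<in> MA then dA e v else 0)"
      using reduced_edges copy_edges_disjoint by (auto simp: reduction_def)
  qed
  ultimately show ?thesis
    unfolding tiling_def using cross_load by (simp add: sum.distrib)
qed

lemma load_V2:
  assumes "v \<in> V2"
  shows "(\<Sum>e\<in>E. tiling v e) = 1 - (\<Sum>e\<in>MB. if v \<in> e then dB e v else 0)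
    + (\<Sum>q\<in>Q. if snd q = v then PW q else 0)"
proof -
  have "v \<noteq> u" "\<forall>q\<in>Q. v \<noteq> fst q" using assms apex Q_sub disjoint_copies by auto
  then have "cross_value v q = (if snd q = v then PW q else 0)" if "q \<in> Q" for q
    using that unfolding cross_value_def by auto
  moreover have "(\<Sum>e\<in>E. if e \<in> E1 \<union> E2 \<and> v \<in> e then std v - reduction e v else 0)
      = 1 - (\<Sum>e\<in>MB. if v \<in> e then dB e v else 0)"
  proof (rule copy_load)
    show "MB \<subseteq> E2" "E2 \<subseteq> E" "E2 \<subseteq> E1 \<union> E2" using reduced_edges copies_in_E by auto
    show "(\<Sum>e\<in>E2. if v \<in> e then std v else 0) = 1" using standard_load(2) assms .
    show "\<forall>e\<in>E. e \<in> E1 \<union> E2 \<and> v \<in> e \<longrightarrow> e \<in> E2"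
      using assms edge_E1_sub disjoint_copies by blast
    show "\<forall>e\<in>E2. reduction e v = (if e \<in> MB then dB e v else 0)"
      using reduced_edges copy_edges_disjoint by (auto simp: reduction_def)
  qed
  ultimately show ?thesis
    unfolding tiling_def using cross_load by (simp add: sum.distrib)
qed

lemma load_apex: "(\<Sum>e\<in>E. tiling u e) = (\<Sum>q\<in>Q. PU q)"
proof -
  have "u \<notin> e" if "e \<in> E1 \<union> E2" for e using that edge_E1_sub edge_E2_sub apex by blast
  then have "(\<Sum>e\<in>E. if e \<in> E1 \<union> E2 \<and> u \<in> e then std u - reduction e u else 0) = 0"
    by (intro sum.neutral) auto
  then show ?thesis
    unfolding tiling_def using cross_load[of u] by (simp add: sum.distrib cross_value_def)
qed

lemma reduction_bounds:
  assumes "e \<in> E1 \<union> E2" "v \<in> e"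
  shows "0 \<le> reduction e v" "\<mu> \<le> std v - reduction e v"
  using assms reduced_bounds1 reduced_bounds2 std_bounds(2)[of v] unfolding reduction_def by auto

lemma tiling_bounds:
  assumes "e \<in> E"
  shows "0 \<le> tiling v e" "tiling v e \<le> 1" "tiling v e \<noteq> 0 \<Longrightarrow> \<mu> \<le> tiling v e"
proof -
  have "0 \<le> tiling v e \<and> tiling v e \<le> 1 \<and> (tiling v e \<noteq> 0 \<longrightarrow> \<mu> \<le> tiling v e)"
  proof (cases rule: edge_cases[of e])
    case 1
    show ?thesis
    proof (cases "v \<in> e")
      case True
      then have "\<mu> \<le> tiling v e" "tiling v e \<le> std v"
        using tiling_copy_edge[OF 1] reduction_bounds[OF 1 True] by simp_all
      then show ?thesis using std_bounds(1) std_bounds(3)[of v] by linarith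
    qed (simp add: tiling_copy_edge[OF 1])
  next
    case (2 q)
    then show ?thesis
      using tiling_cross_edge cross_bounds std_bounds(1)
      unfolding cross_value_def admissible_cross_def by auto
  next
    case 3
    then show ?thesis using tiling_other_edge by simp
  qed
  then show "0 \<le> tiling v e" "tiling v e \<le> 1" "tiling v e \<noteq> 0 \<Longrightarrow> \<mu> \<le> tiling v e" by auto
qed

lemma tiling_outside: "v \<notin> e \<Longrightarrow> tiling v e = 0"
  by (cases rule: edge_cases[of e]) (auto simp: tiling_copy_edge tiling_cross_edge
      tiling_other_edge cross_value_def)

lemma copy_edge_admissible:
  assumes "e \<in> E1 \<union> E2"
  shows "\<exists>x y z. e = {x, y, z} \<and> x \<noteq> y \<and> x \<noteq> z \<and> y \<noteq> z \<and>
    hom_admissible a b c (std x - reduction e x) (std y - reduction e y) (std z - reduction e z)"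
proof -
  have witness: "\<exists>x y z. e = {x, y, z} \<and> x \<noteq> y \<and> x \<noteq> z \<and> y \<noteq> z \<and>
      hom_admissible a b c (std x - r x) (std y - r y) (std z - r z)"
    if "x \<in> X" "y \<in> Y" "z \<in> Z" "X \<inter> Y = {}" "X \<inter> Z = {}" "Y \<inter> Z = {}" "e = {x, y, z}"
      "hom_admissible a b c (std x - r x) (std y - r y) (std z - r z)" for x y z X Y Z r
    using that by blast
  consider "e \<in> MA" | "e \<in> MB" | "e \<notin> MA" "e \<notin> MB" by blast
  then show ?thesis
  proof cases
    case 1
    then have "reduction e = dA e" by (simp add: reduction_def fun_eq_iff)
    moreover obtain x y z where xyz: "x \<in> A1" "y \<in> B1" "z \<in> C1" "e = {x, y, z}"
      using 1 reduced_edges by (meson subsetD complete3partiteE)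
    moreover have "hom_admissible a b c (std x - dA e x) (std y - dA e y) (std z - dA e z)"
      using bspec[OF reduced_admissible1 1] xyz by blast
    ultimately show ?thesis using witness[of _ A1 _ B1 _ C1] disjoint1 by simp
  next
    case 2
    moreover have "e \<notin> MA" using 2 reduced_edges copy_edges_disjoint by blast
    ultimately have "reduction e = dB e" by (simp add: reduction_def fun_eq_iff)
    moreover obtain x y z where xyz: "x \<in> A2" "y \<in> B2" "z \<in> C2" "e = {x, y, z}"
      using 2 reduced_edges by (meson subsetD complete3partiteE)
    moreover have "hom_admissible a b c (std x - dB e x) (std y - dB e y) (std z - dB e z)"
      using bspec[OF reduced_admissible2 2] xyz by blast
    ultimately show ?thesis using witness[of _ A2 _ B2 _ C2] disjoint2 by simp
  next
    case 3
    then have "reduction e = (\<lambda>_. 0)" by (simp add: reduction_def fun_eq_iff)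
    moreover have "hom_admissible a b c (std x) (std y) (std z)"
      if "x \<in> A1 \<union> A2" "y \<in> B1 \<union> B2" "z \<in> C1 \<union> C2" for x y z
      using std_ratio_ordered[OF that] unfolding hom_admissible_def by blast
    moreover have "e \<in> E1 \<or> e \<in> E2" using assms by blast
    ultimately show ?thesis
      using witness[of _ A1 _ B1 _ C1 "\<lambda>_. 0"] witness[of _ A2 _ B2 _ C2 "\<lambda>_. 0"] disjoint1 disjoint2
      by (auto elim!: complete3partiteE)
  qed
qed

lemma tiling_labelling:
  assumes "e \<in> E"
  shows "\<exists>x y z. e = {x, y, z} \<and> x \<noteq> y \<and> x \<noteq> z \<and> y \<noteq> z \<and>
    tiling x e \<le> tiling y e \<and> tiling y e \<le> tiling z e \<and>
    tiling x e / real a \<ge> tiling y e / real b \<and> tiling y e / real b \<ge> tiling z e / real c"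
proof (cases rule: edge_cases[of e])
  case 1
  obtain x y z where xyz: "e = {x, y, z}" "x \<noteq> y" "x \<noteq> z" "y \<noteq> z"
    and adm: "hom_admissible a b c (std x - reduction e x) (std y - reduction e y) (std z - reduction e z)"
    using copy_edge_admissible[OF 1] by (elim exE conjE) (rule that; assumption)
  have "x \<in> e" "y \<in> e" "z \<in> e" using xyz(1) by simp_all
  then have "hom_admissible a b c (tiling x e) (tiling y e) (tiling z e)"
    using adm by (simp add: tiling_copy_edge[OF 1])
  then show ?thesis by (rule hom_admissible_labelling[OF _ xyz])
next
  case (2 q)
  have distinct: "u \<noteq> fst q" "u \<noteq> snd q" "fst q \<noteq> snd q"
    using cross_pair_distinct[OF 2(1)] by simp_all
  have "hom_admissible a b c (PU q) (PV q) (PW q)"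
    using bspec[OF cross_bounds 2(1)] by (simp add: admissible_cross_def)
  moreover have "tiling u e = PU q" "tiling (fst q) e = PV q" "tiling (snd q) e = PW q"
    unfolding 2(2) tiling_cross_edge[OF 2(1)] cross_value_def using distinct by auto
  ultimately have "hom_admissible a b c (tiling u e) (tiling (fst q) e) (tiling (snd q) e)"
    by simp
  then show ?thesis by (rule hom_admissible_labelling[OF _ 2(2) distinct])
next
  case 3
  then have "tiling v e = 0" for v by (rule tiling_other_edge)
  moreover obtain x y z where "e = {x, y, z}" "x \<noteq> y" "x \<noteq> z" "y \<noteq> z"
    using assms edges by (auto simp: card_3_iff)
  ultimately show ?thesis by (intro exI[of _ x] exI[of _ y] exI[of _ z]) simp
qed

lemma weight_V1:
  "(\<Sum>v\<in>V1. \<Sum>e\<in>E. tiling v e) = real (a + b + c) - (\<Sum>e\<in>MA. \<Sum>v\<in>e. dA e v) + (\<Sum>q\<in>Q. PV q)"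
proof -
  have "(\<Sum>v\<in>V1. \<Sum>e\<in>E. tiling v e) = (\<Sum>v\<in>V1. 1 - (\<Sum>e\<in>MA. if v \<in> e then dA e v else 0)
      + (\<Sum>q\<in>Q. if fst q = v then PV q else 0))"
    using load_V1 by simp
  also have "\<dots> = real (card V1) - (\<Sum>e\<in>MA. \<Sum>v\<in>e. dA e v) + (\<Sum>q\<in>Q. PV q)"
  proof -
    have sub: "\<forall>e\<in>MA. e \<subseteq> V1" "fst ` Q \<subseteq> V1" using reduced_edges edge_E1_sub Q_sub by auto
    show ?thesis
      using sum_incidences[OF finite_V1 sub(1), of dA] sum_fibres[OF finite_V1 sub(2), of PV]
      by (simp add: sum.distrib sum_subtractf)
  qed
  finally show ?thesis using card_V1 by simp
qed

lemma weight_V2: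
  "(\<Sum>v\<in>V2. \<Sum>e\<in>E. tiling v e) = real (a + b + c) - (\<Sum>e\<in>MB. \<Sum>v\<in>e. dB e v) + (\<Sum>q\<in>Q. PW q)"
proof -
  have "(\<Sum>v\<in>V2. \<Sum>e\<in>E. tiling v e) = (\<Sum>v\<in>V2. 1 - (\<Sum>e\<in>MB. if v \<in> e then dB e v else 0)
      + (\<Sum>q\<in>Q. if snd q = v then PW q else 0))"
    using load_V2 by simp
  also have "\<dots> = real (card V2) - (\<Sum>e\<in>MB. \<Sum>v\<in>e. dB e v) + (\<Sum>q\<in>Q. PW q)"
  proof -
    have sub: "\<forall>e\<in>MB. e \<subseteq> V2" "snd ` Q \<subseteq> V2" using reduced_edges edge_E2_sub Q_sub by auto
    show ?thesis
      using sum_incidences[OF finite_V2 sub(1), of dB] sum_fibres[OF finite_V2 sub(2), of PW]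
      by (simp add: sum.distrib sum_subtractf)
  qed
  finally show ?thesis using card_V2 by simp
qed

lemma tiling_weight_bound:
  "tiling_weight (insert u (V1 \<union> V2)) E tiling \<ge> 2 * real (a + b + c) + s / real c"
proof -
  have "u \<notin> V1 \<union> V2" using apex by blast
  then have "tiling_weight (insert u (V1 \<union> V2)) E tiling
      = (\<Sum>e\<in>E. tiling u e) + (\<Sum>v\<in>V1. \<Sum>e\<in>E. tiling v e) + (\<Sum>v\<in>V2. \<Sum>e\<in>E. tiling v e)"
    unfolding tiling_weight_def using finite_V1 finite_V2 disjoint_copies
    by (simp add: sum.union_disjoint)
  then show ?thesis
    using load_apex weight_V1 weight_V2 gain by (simp add: sum.distrib)
qed

lemma tiling_hmin_bound: "tiling_hmin (insert u (V1 \<union> V2)) E tiling \<ge> \<mu>"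
proof -
  let ?S = "{tiling v e |v e. v \<in> insert u (V1 \<union> V2) \<and> e \<in> E \<and> tiling v e \<noteq> 0}"
  have fin: "finite ?S"
  proof -
    have "?S \<subseteq> (\<lambda>(v, e). tiling v e) ` (insert u (V1 \<union> V2) \<times> E)" by auto
    moreover have "finite (insert u (V1 \<union> V2) \<times> E)" using finite_V1 finite_V2 finite_E by simp
    ultimately show ?thesis by (meson finite_imageI finite_subset)
  qed
  moreover have ne: "?S \<noteq> {}"
  proof -
    have "A1 \<noteq> {}" "B1 \<noteq> {}" "C1 \<noteq> {}" using card_parts sizes by auto
    then obtain x y z where "x \<in> A1" "y \<in> B1" "z \<in> C1" by blast
    then have "{x, y, z} \<in> E1" by (rule complete3partiteI)
    then have "\<mu> \<le> tiling x {x, y, z}" by (simp add: tiling_copy_edge reduction_bounds)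
    then have "tiling x {x, y, z} \<noteq> 0" using std_bounds(1) by linarith
    moreover have "{x, y, z} \<in> E" "x \<in> insert u (V1 \<union> V2)"
      using \<open>{x, y, z} \<in> E1\<close> \<open>x \<in> A1\<close> copies_in_E by auto
    ultimately show ?thesis by blast
  qed
  moreover have "\<mu> \<le> t" if "t \<in> ?S" for t using that tiling_bounds(3) by blast
  ultimately show ?thesis unfolding tiling_hmin_def by (rule Min.boundedI)
qed

lemma has_good_tiling_by_exchange: "has_good_tiling a b c (insert u (V1 \<union> V2)) E"
  unfolding has_good_tiling_def
proof (intro exI conjI)
  show "frac_hom_tiling a b c (insert u (V1 \<union> V2)) E tiling"
    unfolding frac_hom_tiling_def
  proof (intro conjI ballI impI)
    fix v e assume "e \<in> E"
    then show "0 \<le> tiling v e" "tiling v e \<le> 1" by (rule tiling_bounds)+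
    show "v \<notin> e \<Longrightarrow> tiling v e = 0" by (rule tiling_outside)
  next
    fix v assume "v \<in> insert u (V1 \<union> V2)"
    then consider "v = u" | "v \<in> V1" | "v \<in> V2" by blast
    then show "(\<Sum>e\<in>E. tiling v e) \<le> 1"
    proof cases
      case 1 then show ?thesis using load_apex apex_load by simp
    next
      case 2 then show ?thesis using load_V1 freed1 by fastforce
    next
      case 3 then show ?thesis using load_V2 freed2 by fastforce
    qed
  next
    fix e assume "e \<in> E"
    then show "\<exists>x y z. e = {x, y, z} \<and> x \<noteq> y \<and> x \<noteq> z \<and> y \<noteq> z \<and>
      tiling x e \<le> tiling y e \<and> tiling y e \<le> tiling z e \<and>
      tiling y e / real b \<le> tiling x e / real a \<and> tiling z e / real c \<le> tiling y e / real b"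
      by (rule tiling_labelling)
  qed
  have "s / real c = 1 / (real a * real b * real c ^ 2)"
    using sizes_real by (simp add: unit_weight_def power2_eq_square)
  then show "tiling_weight (insert u (V1 \<union> V2)) E tiling
      \<ge> 2 * real (a + b + c) + 1 / (real a * real b * real c ^ 2)"
    using tiling_weight_bound by simp
  show "tiling_hmin (insert u (V1 \<union> V2)) E tiling \<ge> 1 / (real b * real c ^ 2)"
    using tiling_hmin_bound mu_eq by simp
qed

end

end

text \<open>
  A reduction (p, q, r) is subtracted from the standard weights of the vertices of a copy edge lying in
  the parts of size a, b and c; the labelling of the edge keeps the order of the parts.
\<close>

definition admissible_reduction :: "nat \<Rightarrow> nat \<Rightarrow> nat \<Rightarrow> real \<Rightarrow> real \<Rightarrow> real \<Rightarrow> bool" where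
  "admissible_reduction a b c p q r \<longleftrightarrow> 0 \<le> p \<and> 0 \<le> q \<and> 0 \<le> r \<and>
     min_weight a b c \<le> real a * unit_weight a b c - p \<and>
     min_weight a b c \<le> real b * unit_weight a b c - q \<and>
     min_weight a b c \<le> real c * unit_weight a b c - r \<and>
     ratio_ordered a b c (real a * unit_weight a b c - p) (real b * unit_weight a b c - q)
       (real c * unit_weight a b c - r)"

definition edge_reduction :: "'v \<Rightarrow> 'v \<Rightarrow> 'v \<Rightarrow> real \<Rightarrow> real \<Rightarrow> real \<Rightarrow> 'v \<Rightarrow> real" where
  "edge_reduction x y z p q r v = (if v = x then p else if v = y then q else if v = z then r else 0)"

lemma edge_reduction_outside: "v \<notin> {x, y, z} \<Longrightarrow> edge_reduction x y z p q r v = 0"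
  by (simp add: edge_reduction_def)

lemma sum_edge_reduction:
  "x \<noteq> y \<Longrightarrow> x \<noteq> z \<Longrightarrow> y \<noteq> z \<Longrightarrow> (\<Sum>v\<in>{x, y, z}. edge_reduction x y z p q r v) = p + q + r"
  by (simp add: edge_reduction_def)

context two_copies
begin

lemma parts_nonempty: "A1 \<noteq> {}" "B1 \<noteq> {}" "C1 \<noteq> {}" "A2 \<noteq> {}" "B2 \<noteq> {}" "C2 \<noteq> {}"
  using card_parts sizes by auto

lemma reduced_edge_conditions:
  assumes "x \<in> A" "y \<in> B" "z \<in> C" "A \<inter> B = {}" "A \<inter> C = {}" "B \<inter> C = {}"
    and "A \<subseteq> A1 \<union> A2" "B \<subseteq> B1 \<union> B2" "C \<subseteq> C1 \<union> C2" and "admissible_reduction a b c p q r"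
  defines "d \<equiv> edge_reduction x y z p q r"
  shows "\<forall>x'\<in>A. \<forall>y'\<in>B. \<forall>z'\<in>C. {x, y, z} = {x', y', z'} \<longrightarrow>
      hom_admissible a b c (std x' - d x') (std y' - d y') (std z' - d z')"
    and "\<forall>v\<in>{x, y, z}. 0 \<le> d v \<and> \<mu> \<le> std v - d v"
    and "(\<Sum>v\<in>{x, y, z}. d v) = p + q + r"
proof -
  have distinct: "x \<noteq> y" "x \<noteq> z" "y \<noteq> z" using assms(1-6) by auto
  have std: "std x = real a * s" "std y = real b * s" "std z = real c * s"
    using assms(1-3,7-9) std_A std_B std_C by auto
  have d: "d x = p" "d y = q" "d z = r" using distinct unfolding d_def edge_reduction_def by auto
  show "\<forall>x'\<in>A. \<forall>y'\<in>B. \<forall>z'\<in>C. {x, y, z} = {x', y', z'} \<longrightarrow>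
      hom_admissible a b c (std x' - d x') (std y' - d y') (std z' - d z')"
    using complete3partite_labels_unique[of x y z _ _ _ A B C] assms(1-6,10) std d
    unfolding admissible_reduction_def hom_admissible_def by metis
  show "\<forall>v\<in>{x, y, z}. 0 \<le> d v \<and> \<mu> \<le> std v - d v"
    using assms(10) std d unfolding admissible_reduction_def by auto
  show "(\<Sum>v\<in>{x, y, z}. d v) = p + q + r"
    unfolding d_def using distinct by (rule sum_edge_reduction)
qed

lemma has_good_tiling_by_exchange_1_1:
  assumes parts: "x1 \<in> A1" "y1 \<in> B1" "z1 \<in> C1" "x2 \<in> A2" "y2 \<in> B2" "z2 \<in> C2"
    and reductions: "admissible_reduction a b c p1 q1 r1" "admissible_reduction a b c p2 q2 r2"
    and Q: "finite Q" "Q \<subseteq> V1 \<times> V2" "\<forall>q\<in>Q. {u, fst q, snd q} \<in> E"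
    and cross: "\<forall>q\<in>Q. admissible_cross a b c (PU q) (PV q) (PW q)"
    and freed1: "\<forall>v\<in>V1. (\<Sum>q\<in>Q. if fst q = v then PV q else 0) \<le> edge_reduction x1 y1 z1 p1 q1 r1 v"
    and freed2: "\<forall>w\<in>V2. (\<Sum>q\<in>Q. if snd q = w then PW q else 0) \<le> edge_reduction x2 y2 z2 p2 q2 r2 w"
    and apex_load: "(\<Sum>q\<in>Q. PU q) \<le> 1"
    and gain: "(\<Sum>q\<in>Q. PU q + PV q + PW q) - (p1 + q1 + r1) - (p2 + q2 + r2) \<ge> s / real c"
  shows "has_good_tiling a b c (insert u (V1 \<union> V2)) E"
proof -
  note edge1 = reduced_edge_conditions[OF parts(1-3) disjoint1 _ _ _ reductions(1)]
  note edge2 = reduced_edge_conditions[OF parts(4-6) disjoint2 _ _ _ reductions(2)]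
  have single_edge_load: "(\<Sum>e\<in>{{x, y, z}}. if v \<in> e then edge_reduction x y z p q r v else 0)
      = edge_reduction x y z p q r v" for x y z p q r and v :: 'v
    by (simp add: edge_reduction_outside)
  show ?thesis
  proof (rule has_good_tiling_by_exchange[where MA = "{{x1, y1, z1}}" and MB = "{{x2, y2, z2}}"
      and dA = "\<lambda>_. edge_reduction x1 y1 z1 p1 q1 r1" and dB = "\<lambda>_. edge_reduction x2 y2 z2 p2 q2 r2"
      and Q = Q and PU = PU and PV = PV and PW = PW])
    show "{{x1, y1, z1}} \<subseteq> E1" "{{x2, y2, z2}} \<subseteq> E2"
      using parts by (simp_all add: complete3partiteI)
  qed (use Q cross freed1 freed2 apex_load gain edge1 edge2 single_edge_load in simp_all)
qed

lemma has_good_tiling_by_exchange_2_1: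
  assumes parts: "x1 \<in> A1" "y1 \<in> B1" "z1 \<in> C1" "x1' \<in> A1" "y1' \<in> B1" "z1' \<in> C1"
      "x2 \<in> A2" "y2 \<in> B2" "z2 \<in> C2"
    and different: "{x1, y1, z1} \<noteq> {x1', y1', z1'}"
    and reductions: "admissible_reduction a b c p1 q1 r1" "admissible_reduction a b c p1' q1' r1'"
      "admissible_reduction a b c p2 q2 r2"
    and Q: "finite Q" "Q \<subseteq> V1 \<times> V2" "\<forall>q\<in>Q. {u, fst q, snd q} \<in> E"
    and cross: "\<forall>q\<in>Q. admissible_cross a b c (PU q) (PV q) (PW q)"
    and freed1: "\<forall>v\<in>V1. (\<Sum>q\<in>Q. if fst q = v then PV q else 0)
      \<le> edge_reduction x1 y1 z1 p1 q1 r1 v + edge_reduction x1' y1' z1' p1' q1' r1' v"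
    and freed2: "\<forall>w\<in>V2. (\<Sum>q\<in>Q. if snd q = w then PW q else 0) \<le> edge_reduction x2 y2 z2 p2 q2 r2 w"
    and apex_load: "(\<Sum>q\<in>Q. PU q) \<le> 1"
    and gain: "(\<Sum>q\<in>Q. PU q + PV q + PW q) - (p1 + q1 + r1) - (p1' + q1' + r1') - (p2 + q2 + r2)
      \<ge> s / real c"
  shows "has_good_tiling a b c (insert u (V1 \<union> V2)) E"
proof -
  define e1 e1' where "e1 = {x1, y1, z1}" and "e1' = {x1', y1', z1'}"
  define dA where "dA e = (if e = e1 then edge_reduction x1 y1 z1 p1 q1 r1
    else edge_reduction x1' y1' z1' p1' q1' r1')" for e
  note edge1 = reduced_edge_conditions[OF parts(1-3) disjoint1 _ _ _ reductions(1)]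
  note edge1' = reduced_edge_conditions[OF parts(4-6) disjoint1 _ _ _ reductions(2)]
  note edge2 = reduced_edge_conditions[OF parts(7-9) disjoint2 _ _ _ reductions(3)]
  have load1: "(\<Sum>e\<in>{e1, e1'}. if v \<in> e then dA e v else 0)
      = edge_reduction x1 y1 z1 p1 q1 r1 v + edge_reduction x1' y1' z1' p1' q1' r1' v" for v
    using different by (simp add: dA_def e1_def e1'_def edge_reduction_outside)
  have load2: "(\<Sum>e\<in>{{x2, y2, z2}}. if v \<in> e then edge_reduction x2 y2 z2 p2 q2 r2 v else 0)
      = edge_reduction x2 y2 z2 p2 q2 r2 v" for v
    by (simp add: edge_reduction_outside)
  show ?thesis
  proof (rule has_good_tiling_by_exchange[where MA = "{e1, e1'}" and MB = "{{x2, y2, z2}}"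
      and dA = dA and dB = "\<lambda>_. edge_reduction x2 y2 z2 p2 q2 r2"
      and Q = Q and PU = PU and PV = PV and PW = PW])
    show "{e1, e1'} \<subseteq> E1" "{{x2, y2, z2}} \<subseteq> E2"
      using parts by (simp_all add: e1_def e1'_def complete3partiteI)
    show "\<forall>e\<in>{e1, e1'}. \<forall>x\<in>A1. \<forall>y\<in>B1. \<forall>z\<in>C1. e = {x, y, z} \<longrightarrow>
        hom_admissible a b c (std x - dA e x) (std y - dA e y) (std z - dA e z)"
      "\<forall>e\<in>{e1, e1'}. \<forall>v\<in>e. 0 \<le> dA e v \<and> \<mu> \<le> std v - dA e v"
      using edge1 edge1' different by (simp_all add: dA_def e1_def e1'_def)
    show "s / real c \<le> (\<Sum>q\<in>Q. PU q + PV q + PW q) - (\<Sum>e\<in>{e1, e1'}. \<Sum>v\<in>e. dA e v)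
        - (\<Sum>e\<in>{{x2, y2, z2}}. \<Sum>v\<in>e. edge_reduction x2 y2 z2 p2 q2 r2 v)"
      using gain edge1 edge1' edge2 different by (simp add: dA_def e1_def e1'_def)
  qed (use Q cross freed1 freed2 apex_load edge2 load1 load2 in simp_all)
qed

section \<open>Arithmetic of the weights\<close>

lemma weight_basics: "0 < s" "s \<le> 1 / 2" "0 < \<mu>" "\<mu> \<le> s" "s / real c \<le> \<mu>" "\<mu> \<le> real a * s"
  "real a * s \<le> real b * s" "real b * s \<le> real c * s" "\<mu> * real c = real a * s" "2 * \<mu> \<le> real a * s"
proof -
  show "0 < s" "0 < \<mu>" "\<mu> * real c = real a * s" using sizes_real by (simp_all add: min_weight_def)
  have "1 * 1 \<le> real a * real b" using sizes_real by (intro mult_mono) auto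
  then have "1 * 2 \<le> real a * real b * real c" using sizes_real by (intro mult_mono) auto
  then show "s \<le> 1 / 2" by (simp add: unit_weight_def field_simps)
  show "\<mu> \<le> s" "s / real c \<le> \<mu>" "\<mu> \<le> real a * s" "real a * s \<le> real b * s" "real b * s \<le> real c * s"
    "2 * \<mu> \<le> real a * s"
    using sizes_real by (simp_all add: min_weight_def divide_le_eq divide_right_mono mult_right_mono)
qed

lemma mult_unit_weight_mono: "X \<le> Y \<Longrightarrow> X * s \<le> Y * s"
  using weight_basics(1) by (simp add: mult_right_mono)

lemma admissible_reductionI:
  assumes "0 \<le> p" "0 \<le> q" "0 \<le> r" "\<mu> \<le> real a * s - p" "\<mu> \<le> real b * s - q" "\<mu> \<le> real c * s - r"
    "real a * s - p \<le> real b * s - q" "real b * s - q \<le> real c * s - r"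
    "(real b * s - q) / real b \<le> (real a * s - p) / real a"
    "(real c * s - r) / real c \<le> (real b * s - q) / real b"
  shows "admissible_reduction a b c p q r"
  using assms unfolding admissible_reduction_def ratio_ordered_def by simp

lemma admissible_reduction_linear:
  assumes "0 \<le> p" "0 \<le> q" "0 \<le> r" "r \<le> s" "\<mu> + p \<le> real a * s"
    "real a * s - p \<le> real b * s - q" "real b * s - q \<le> real c * s - r"
    "p * real b \<le> q * real a" "q * real c \<le> r * real b"
  shows "admissible_reduction a b c p q r"
proof (rule admissible_reductionI)
  have "2 * s \<le> real c * s" using sizes_real by (simp add: mult_unit_weight_mono)
  then show "\<mu> \<le> real c * s - r" using assms(4) weight_basics(4) by linarith
  show "(real b * s - q) / real b \<le> (real a * s - p) / real a"
    using assms(8) sizes_real by (simp add: field_simps)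
  show "(real c * s - r) / real c \<le> (real b * s - q) / real b"
    using assms(9) sizes_real by (simp add: field_simps)
qed (use assms in linarith)+

lemma admissible_cross_sorted:
  assumes "\<mu> \<le> x" "x \<le> y" "y \<le> z" "z \<le> 1" "y * real a \<le> x * real b" "z * real b \<le> y * real c"
  shows "admissible_cross a b c x y z" "admissible_cross a b c x z y" "admissible_cross a b c y x z"
    "admissible_cross a b c y z x" "admissible_cross a b c z x y" "admissible_cross a b c z y x"
proof -
  have "ratio_ordered a b c x y z"
    using assms sizes_real unfolding ratio_ordered_def by (simp add: field_simps)
  then show "admissible_cross a b c x y z" "admissible_cross a b c x z y" "admissible_cross a b c y x z"
    "admissible_cross a b c y z x" "admissible_cross a b c z x y" "admissible_cross a b c z y x"
    using assms unfolding admissible_cross_def hom_admissible_def by auto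
qed

lemma unit_weight_gap: "x + 1 \<le> y \<Longrightarrow> x * s + s \<le> y * s"
  using mult_unit_weight_mono[of "x + 1" y] by (simp add: algebra_simps)

lemma reduction_C:
  assumes "b < c" "0 \<le> t" "t \<le> s"
  shows "admissible_reduction a b c 0 0 t"
proof -
  have "real b * s + s \<le> real c * s" "0 \<le> t * real b"
    using assms(1,2) by (auto intro!: unit_weight_gap)
  then show ?thesis
    using assms(2,3) weight_basics(4,6,7) by (intro admissible_reduction_linear) simp_all
qed

lemma reduction_AB_mu_C_unit:
  assumes "a = b" "b < c"
  shows "admissible_reduction a b c \<mu> \<mu> s"
proof -
  have "\<mu> * real c = s * real b" "\<mu> * real b = \<mu> * real a"
    using assms(1) weight_basics(9) by simp_all
  moreover have "real b * s + s \<le> real c * s" using assms(2) by (intro unit_weight_gap) simp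
  ultimately show ?thesis
    using weight_basics(1,3,7,10) by (intro admissible_reduction_linear) simp_all
qed

lemma reductions_B_eq_C:
  assumes "a < b" "b = c"
  shows "admissible_reduction a b c 0 \<mu> \<mu>" "admissible_reduction a b c 0 s s"
    "admissible_reduction a b c \<mu> s s"
proof -
  have gap: "real a * s + s \<le> real b * s" using assms(1) by (intro unit_weight_gap) simp
  have eqs: "\<mu> * real b = s * real a" "\<mu> * real c = \<mu> * real b" "s * real c = s * real b"
    using assms(2) weight_basics(9) by (simp_all add: mult.commute)
  have pos: "0 \<le> \<mu> * real a" "0 \<le> s * real a" "0 \<le> s"
    using weight_basics(1,3) by simp_all
  note facts = gap eqs pos weight_basics(3,4,6,8,10)
  show "admissible_reduction a b c 0 \<mu> \<mu>"
    by (rule admissible_reduction_linear) (use facts in linarith)+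
  show "admissible_reduction a b c 0 s s"
    by (rule admissible_reduction_linear) (use facts in linarith)+
  show "admissible_reduction a b c \<mu> s s"
    by (rule admissible_reduction_linear) (use facts in linarith)+
qed

lemma admissible_cross_const: "\<mu> \<le> t \<Longrightarrow> t \<le> 1 \<Longrightarrow> admissible_cross a b c t t t"
proof (rule admissible_cross_sorted)
  assume "\<mu> \<le> t"
  then have "0 \<le> t" using weight_basics(3) by linarith
  then show "t * real a \<le> t * real b" "t * real b \<le> t * real c"
    using sizes_real by (simp_all add: mult_left_mono)
qed simp_all

lemma cross_mu_mu_unit:
  assumes "a = b"
  shows "admissible_cross a b c \<mu> \<mu> s" "admissible_cross a b c \<mu> s \<mu>" "admissible_cross a b c s \<mu> \<mu>"
proof -
  have "s * real b = \<mu> * real c" "\<mu> \<le> s" "s \<le> 1"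
    using assms weight_basics(2,4,9) by simp_all
  then show "admissible_cross a b c \<mu> \<mu> s" "admissible_cross a b c \<mu> s \<mu>" "admissible_cross a b c s \<mu> \<mu>"
    using assms admissible_cross_sorted(1,2,5)[of \<mu> \<mu> s] by simp_all
qed

lemma cross_mu_unit_unit:
  assumes "b = c"
  shows "admissible_cross a b c s \<mu> s"
proof -
  have "s * real a = \<mu> * real b" "\<mu> \<le> s" "s \<le> 1"
    using assms weight_basics(2,4,9) by (simp_all add: mult.commute)
  then show ?thesis using assms admissible_cross_sorted(3)[of \<mu> s s] by simp
qed

section \<open>Configurations of crossing edges\<close>

lemma distinct_in_copy1: "x \<in> A1 \<Longrightarrow> y \<in> B1 \<Longrightarrow> z \<in> C1 \<Longrightarrow> x \<noteq> y \<and> x \<noteq> z \<and> y \<noteq> z"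
  and distinct_in_copy2: "x \<in> A2 \<Longrightarrow> y \<in> B2 \<Longrightarrow> z \<in> C2 \<Longrightarrow> x \<noteq> y \<and> x \<noteq> z \<and> y \<noteq> z"
  using disjoint1 disjoint2 by auto

lemma has_good_tiling_CC:
  assumes "b < c" "z1 \<in> C1" "z2 \<in> C2" "{u, z1, z2} \<in> E"
  shows "has_good_tiling a b c (insert u (V1 \<union> V2)) E"
proof -
  obtain x1 y1 x2 y2 where parts: "x1 \<in> A1" "y1 \<in> B1" "x2 \<in> A2" "y2 \<in> B2"
    using parts_nonempty by blast
  have "admissible_reduction a b c 0 0 \<mu>"
    using assms(1) weight_basics by (intro reduction_C) simp_all
  moreover have "admissible_cross a b c \<mu> \<mu> \<mu>"
    using weight_basics by (intro admissible_cross_const) simp_all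
  moreover have "\<mu> \<le> 1" "s / real c \<le> \<mu>" using weight_basics by linarith+
  ultimately show ?thesis
    using parts assms(2-) distinct_in_copy1[OF parts(1,2) assms(2)]
      distinct_in_copy2[OF parts(3,4) assms(3)]
    by (intro has_good_tiling_by_exchange_1_1[of x1 y1 z1 x2 y2 z2 0 0 \<mu> 0 0 \<mu> "{(z1, z2)}"
        "\<lambda>_. \<mu>" "\<lambda>_. \<mu>" "\<lambda>_. \<mu>"])
      (auto simp: edge_reduction_def)
qed

lemma has_good_tiling_CB:
  assumes "a < b" "b < c" "z1 \<in> C1" "y2 \<in> B2" "{u, z1, y2} \<in> E"
  shows "has_good_tiling a b c (insert u (V1 \<union> V2)) E"
proof -
  obtain x1 y1 x2 z2 where parts: "x1 \<in> A1" "y1 \<in> B1" "x2 \<in> A2" "z2 \<in> C2"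
    using parts_nonempty by blast
  define w r where "w = real b * s / real c" and "r = real a * s / real b"
  have w: "\<mu> \<le> w" "w \<le> s" "w * real a = \<mu> * real b" "s * real b = w * real c"
    unfolding w_def using sizes_real by (simp_all add: min_weight_def divide_le_eq divide_right_mono)
  have r: "0 \<le> r" "r \<le> s" "\<mu> * real c = r * real b"
    unfolding r_def using sizes_real by (simp_all add: min_weight_def divide_le_eq)
  have gaps: "real a * s + s \<le> real b * s" "real b * s + s \<le> real c * s"
    using assms(1,2) by (auto intro!: unit_weight_gap)
  have "admissible_reduction a b c 0 0 w"
    using assms(2) w weight_basics by (intro reduction_C) simp_all
  moreover have "admissible_reduction a b c 0 \<mu> r"
    using w r gaps weight_basics by (intro admissible_reduction_linear) simp_all
  moreover have "admissible_cross a b c s w \<mu>"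
    using w weight_basics by (intro admissible_cross_sorted(6)) (simp_all add: mult_left_mono)
  moreover have "r + s / real c \<le> s"
  proof -
    have "r \<le> s - s / real b"
      unfolding r_def using gaps(1) sizes_real by (simp add: field_simps)
    moreover have "s / real c \<le> s / real b"
      using sizes_real by (simp add: frac_le)
    ultimately show ?thesis by linarith
  qed
  ultimately show ?thesis
    using parts assms distinct_in_copy1[OF parts(1,2) assms(3)] distinct_in_copy2[OF parts(3) assms(4) parts(4)]
      weight_basics(2) r(1)
    by (intro has_good_tiling_by_exchange_1_1[of x1 y1 z1 x2 y2 z2 0 0 w 0 \<mu> r "{(z1, y2)}"
        "\<lambda>_. s" "\<lambda>_. w" "\<lambda>_. \<mu>"])
      (auto simp: edge_reduction_def)
qed

lemma has_good_tiling_BB_CA: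
  assumes "a < b" "b < c" "y1 \<in> B1" "y2 \<in> B2" "{u, y1, y2} \<in> E"
    and "z1 \<in> C1" "x2 \<in> A2" "{u, z1, x2} \<in> E"
  shows "has_good_tiling a b c (insert u (V1 \<union> V2)) E"
proof -
  obtain x1 z2 where parts: "x1 \<in> A1" "z2 \<in> C2" using parts_nonempty by blast
  define w where "w = real b * s / real c"
  have w: "\<mu> \<le> w" "w \<le> s" "w * real a = \<mu> * real b" "s * real b = w * real c"
    unfolding w_def using sizes_real by (simp_all add: min_weight_def divide_le_eq divide_right_mono)
  have gaps: "real a * s + s \<le> real b * s" "real b * s + s \<le> real c * s"
    using assms(1,2) by (auto intro!: unit_weight_gap)
  have "admissible_reduction a b c 0 w s" "admissible_reduction a b c \<mu> w s"
    using w gaps weight_basics by (auto intro!: admissible_reduction_linear)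
  moreover have "w * real a \<le> w * real b"
    using w weight_basics sizes_real by (intro mult_left_mono) linarith+
  then have "admissible_cross a b c s w w" "admissible_cross a b c w s \<mu>"
    using w weight_basics
    by (auto intro!: admissible_cross_sorted(5)[of w w s] admissible_cross_sorted(4)[of \<mu> w s])
  moreover have "s + w \<le> 1" using w weight_basics by linarith
  ultimately show ?thesis
    using parts assms distinct_in_copy1[OF parts(1) assms(3,6)] distinct_in_copy2[OF assms(7,4) parts(2)]
      w weight_basics
    by (intro has_good_tiling_by_exchange_1_1[of x1 y1 z1 x2 y2 z2 0 w s \<mu> w s "{(y1, y2), (z1, x2)}"
        "\<lambda>q. if q = (y1, y2) then s else w" "\<lambda>q. if q = (y1, y2) then w else s"
        "\<lambda>q. if q = (y1, y2) then w else \<mu>"])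
      (auto simp: edge_reduction_def)
qed

lemma has_good_tiling_AA_BC_CB:
  assumes "a = b" "b < c" "x1 \<in> A1" "x2 \<in> A2" "{u, x1, x2} \<in> E"
    and "y1 \<in> B1" "z2 \<in> C2" "{u, y1, z2} \<in> E"
    and "z1 \<in> C1" "y2 \<in> B2" "{u, z1, y2} \<in> E"
  shows "has_good_tiling a b c (insert u (V1 \<union> V2)) E"
proof -
  have "3 * \<mu> \<le> 1"
  proof -
    have "1 * 2 ^ 2 \<le> real b * real c ^ 2"
      using sizes_real by (intro mult_mono power_mono) simp_all
    then show ?thesis by (simp add: mu_eq field_simps)
  qed
  moreover have "admissible_cross a b c \<mu> \<mu> \<mu>"
    using weight_basics by (intro admissible_cross_const) simp_all
  ultimately show ?thesis
    using assms(3-) reduction_AB_mu_C_unit[OF assms(1,2)] cross_mu_mu_unit[OF assms(1)]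
      distinct_in_copy1[OF assms(3,6,9)] distinct_in_copy2[OF assms(4,10,7)] weight_basics
    by (intro has_good_tiling_by_exchange_1_1[of x1 y1 z1 x2 y2 z2 \<mu> \<mu> s \<mu> \<mu> s
        "{(x1, x2), (y1, z2), (z1, y2)}" "\<lambda>_. \<mu>" "\<lambda>q. if q = (z1, y2) then s else \<mu>"
        "\<lambda>q. if q = (y1, z2) then s else \<mu>"])
      (auto simp: edge_reduction_def)
qed

lemma has_good_tiling_BB_CC:
  assumes "a < b" "b = c" "y1 \<in> B1" "y2 \<in> B2" "{u, y1, y2} \<in> E"
    and "z1 \<in> C1" "z2 \<in> C2" "{u, z1, z2} \<in> E"
  shows "has_good_tiling a b c (insert u (V1 \<union> V2)) E"
proof -
  obtain x1 x2 where parts: "x1 \<in> A1" "x2 \<in> A2" using parts_nonempty by blast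
  have "admissible_cross a b c \<mu> \<mu> \<mu>"
    using weight_basics by (intro admissible_cross_const) simp_all
  then show ?thesis
    using parts assms(3-) reductions_B_eq_C(1)[OF assms(1,2)]
      distinct_in_copy1[OF parts(1) assms(3,6)] distinct_in_copy2[OF parts(2) assms(4,7)]
      weight_basics
    by (intro has_good_tiling_by_exchange_1_1[of x1 y1 z1 x2 y2 z2 0 \<mu> \<mu> 0 \<mu> \<mu>
        "{(y1, y2), (z1, z2)}" "\<lambda>_. \<mu>" "\<lambda>_. \<mu>" "\<lambda>_. \<mu>"])
      (auto simp: edge_reduction_def)
qed

lemma has_good_tiling_BB_AC:
  assumes "a < b" "b = c" "y1 \<in> B1" "y2 \<in> B2" "{u, y1, y2} \<in> E"
    and "x1 \<in> A1" "z2 \<in> C2" "{u, x1, z2} \<in> E"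
  shows "has_good_tiling a b c (insert u (V1 \<union> V2)) E"
proof -
  obtain z1 x2 where parts: "z1 \<in> C1" "x2 \<in> A2" using parts_nonempty by blast
  have "admissible_cross a b c s s s"
    using weight_basics by (intro admissible_cross_const) simp_all
  then show ?thesis
    using parts assms(3-) reductions_B_eq_C(2,3)[OF assms(1,2)] cross_mu_unit_unit[OF assms(2)]
      distinct_in_copy1[OF assms(6,3) parts(1)] distinct_in_copy2[OF parts(2) assms(4,7)]
      weight_basics
    by (intro has_good_tiling_by_exchange_1_1[of x1 y1 z1 x2 y2 z2 \<mu> s s 0 s s
        "{(y1, y2), (x1, z2)}" "\<lambda>_. s" "\<lambda>q. if q = (x1, z2) then \<mu> else s" "\<lambda>_. s"])
      (auto simp: edge_reduction_def)
qed

lemma has_good_tiling_BB_BC: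
  assumes "a < b" "b = c" "y1 \<in> B1" "y2 \<in> B2" "{u, y1, y2} \<in> E"
    and "y1' \<in> B1" "z2 \<in> C2" "{u, y1', z2} \<in> E"
  shows "has_good_tiling a b c (insert u (V1 \<union> V2)) E"
proof -
  obtain x1 x2 where parts: "x1 \<in> A1" "x2 \<in> A2" using parts_nonempty by blast
  obtain z1 z1' where "z1 \<in> C1" "z1' \<in> C1" "z1 \<noteq> z1'"
  proof -
    have "2 \<le> card C1" using card_parts sizes by auto
    then obtain S where "S \<subseteq> C1" "card S = 2" by (meson obtain_subset_with_card_n)
    then show ?thesis using that by (auto simp: card_2_iff)
  qed
  moreover have "{x1, y1, z1} \<noteq> {x1, y1', z1'}"
    using complete3partite_labels_unique[of x1 y1 z1 x1 y1' z1' A1 B1 C1] disjoint1 parts assms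
      calculation by blast
  moreover have "s / real c + 2 * \<mu> \<le> 2 * s"
  proof -
    have "real a * s + s \<le> real c * s" using assms(1,2) by (intro unit_weight_gap) simp
    then show ?thesis using weight_basics sizes_real by (simp add: min_weight_def field_simps)
  qed
  ultimately show ?thesis
    using parts assms(3-) reductions_B_eq_C(1,2)[OF assms(1,2)] cross_mu_unit_unit[OF assms(2)]
      distinct_in_copy1[OF parts(1) assms(3)] distinct_in_copy1[OF parts(1) assms(6)]
      distinct_in_copy2[OF parts(2) assms(4,7)] weight_basics
    by (intro has_good_tiling_by_exchange_2_1[of x1 y1 z1 x1 y1' z1' x2 y2 z2 0 \<mu> \<mu> 0 \<mu> \<mu> 0 s s
        "{(y1, y2), (y1', z2)}" "\<lambda>_. s" "\<lambda>_. \<mu>" "\<lambda>_. s"])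
      (auto simp: edge_reduction_def)
qed

lemma distinct_edges_through:
  assumes "x2 \<in> A2" "y2 \<in> B2" "z2 \<in> C2" "z2' \<in> C2"
  obtains x2' where "x2' \<in> A2" "{x2, y2, z2} \<noteq> {x2', y2, z2'}" | "a = 1" "z2 = z2'"
proof (cases "z2 = z2' \<and> a = 1")
  case False
  then obtain x2' where "x2' \<in> A2" "z2 \<noteq> z2' \<or> x2 \<noteq> x2'"
  proof (cases "z2 = z2'")
    case True
    with False have "1 < card A2" using card_parts sizes by auto
    then obtain x2' where "x2' \<in> A2" "x2' \<noteq> x2"
      using assms(1) by (metis card_le_Suc0_iff_eq finite_parts(4) not_less numeral_1_eq_Suc_0 numerals(1))
    then show ?thesis using that by blast
  qed (use assms(1) that in blast)
  then have "{x2, y2, z2} \<noteq> {x2', y2, z2'}"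
    using complete3partite_labels_unique[of x2 y2 z2 x2' y2 z2' A2 B2 C2] assms disjoint2 by blast
  then show ?thesis using that(1) \<open>x2' \<in> A2\<close> by blast
qed (use that(2) in blast)

lemma has_good_tiling_AC_BC:
  assumes "a = b" "b < c" "x1 \<in> A1" "y1 \<in> B1" "z2 \<in> C2" "z2' \<in> C2"
    and "{u, x1, z2} \<in> E" "{u, y1, z2'} \<in> E"
  shows "has_good_tiling a b c (insert u (V1 \<union> V2)) E"
proof -
  obtain z1 x2 y2 where parts: "z1 \<in> C1" "x2 \<in> A2" "y2 \<in> B2" using parts_nonempty by blast
  note copy1 = reduction_AB_mu_C_unit[OF assms(1,2)] distinct_in_copy1[OF assms(3,4) parts(1)]
  have cross: "admissible_cross a b c s \<mu> \<mu>" by (rule cross_mu_mu_unit(3)[OF assms(1)])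
  have "2 * s \<le> 1" "s / real c \<le> s" using weight_basics sizes_real by (simp_all add: divide_le_eq)
  note weights = this weight_basics(1,3,4)
  \<comment> \<open>Each crossing edge takes \<open>\<mu>\<close> from a second-copy edge through its endpoint in C2; these
    two edges can only coincide when \<open>a = 1\<close> and \<open>z2 = z2'\<close>, and then one edge gives \<open>2 * \<mu>\<close>.\<close>
  show ?thesis
  proof (cases rule: distinct_edges_through[OF parts(2,3) assms(5,6)])
    case (1 x2')
    interpret swapped: two_copies a b c A2 B2 C2 A1 B1 C1 u E by (rule swap_copies)
    have "admissible_reduction a b c 0 0 \<mu>"
      using assms(2) weight_basics by (intro reduction_C) simp_all
    then have "has_good_tiling a b c (insert u (V2 \<union> V1)) E"
      using 1 parts assms(3-) copy1 cross weights distinct_in_copy2[OF parts(2,3) assms(5)]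
        distinct_in_copy2[OF 1(1) parts(3) assms(6)]
      by (intro swapped.has_good_tiling_by_exchange_2_1[of x2 y2 z2 x2' y2 z2' x1 y1 z1
          0 0 \<mu> 0 0 \<mu> \<mu> \<mu> s "{(z2, x1), (z2', y1)}" "\<lambda>_. s" "\<lambda>_. \<mu>" "\<lambda>_. \<mu>"])
        (auto simp: edge_reduction_def insert_commute)
    then show ?thesis by (simp add: Un_commute)
  next
    case 2
    have "\<mu> * 2 \<le> \<mu> * real c" using sizes_real(5) weight_basics(3) by (intro mult_left_mono) simp_all
    moreover have "\<mu> * real c = s" using 2(1) weight_basics(9) by simp
    ultimately have "2 * \<mu> \<le> s" by linarith
    then have "admissible_reduction a b c 0 0 (2 * \<mu>)"
      using assms(2) weight_basics by (intro reduction_C) simp_all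
    then show ?thesis
      using 2(2) parts assms(3-) copy1 cross weights distinct_in_copy2[OF parts(2,3) assms(5)]
      by (intro has_good_tiling_by_exchange_1_1[of x1 y1 z1 x2 y2 z2 \<mu> \<mu> s 0 0 "2 * \<mu>"
          "{(x1, z2), (y1, z2')}" "\<lambda>_. s" "\<lambda>_. \<mu>" "\<lambda>_. \<mu>"])
        (auto simp: edge_reduction_def)
  qed
qed

end

section \<open>Counting crossing edges\<close>

definition cross_pairs :: "'v \<Rightarrow> 'v set set \<Rightarrow> 'v set \<Rightarrow> 'v set \<Rightarrow> ('v \<times> 'v) set" where
  "cross_pairs u E X Y = {p \<in> X \<times> Y. {u, fst p, snd p} \<in> E}"

definition pairs_between :: "('v \<times> 'v) set \<Rightarrow> 'v set \<Rightarrow> 'v set \<Rightarrow> nat" where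
  "pairs_between P X Y = card {p \<in> P. fst p \<in> X \<and> snd p \<in> Y}"

lemma card_partition3:
  assumes "finite P" "\<forall>p\<in>P. f p \<in> X1 \<union> X2 \<union> X3" "X1 \<inter> X2 = {}" "X1 \<inter> X3 = {}" "X2 \<inter> X3 = {}"
  shows "card P = card {p\<in>P. f p \<in> X1} + card {p\<in>P. f p \<in> X2} + card {p\<in>P. f p \<in> X3}"
proof -
  let ?S1 = "{p\<in>P. f p \<in> X1}" and ?S2 = "{p\<in>P. f p \<in> X2}" and ?S3 = "{p\<in>P. f p \<in> X3}"
  have fs: "finite ?S1" "finite ?S2" "finite ?S3" using assms(1) by auto
  have eq: "P = (?S1 \<union> ?S2) \<union> ?S3" using assms(2) by auto
  have d1: "(?S1 \<union> ?S2) \<inter> ?S3 = {}" using assms(4,5) by auto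
  have d2: "?S1 \<inter> ?S2 = {}" using assms(3) by auto
  have "card P = card (?S1 \<union> ?S2) + card ?S3"
    by (subst eq, rule card_Un_disjoint) (use fs d1 in auto)
  also have "card (?S1 \<union> ?S2) = card ?S1 + card ?S2"
    by (rule card_Un_disjoint) (use fs d2 in auto)
  finally show ?thesis .
qed

lemma pairs_between_le: "finite X \<Longrightarrow> finite Y \<Longrightarrow> pairs_between P X Y \<le> card X * card Y"
proof -
  assume "finite X" "finite Y"
  then have "card {p \<in> P. fst p \<in> X \<and> snd p \<in> Y} \<le> card (X \<times> Y)" by (intro card_mono) auto
  then show ?thesis unfolding pairs_between_def by (simp add: card_cartesian_product)
qed

context two_copies
begin

abbreviation "apex_pairs \<equiv> cross_pairs u E V1 V2"

abbreviation linked :: "'v set \<Rightarrow> 'v set \<Rightarrow> bool" where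
  "linked X Y \<equiv> \<exists>v\<in>X. \<exists>w\<in>Y. {u, v, w} \<in> E"

lemma linked_swap:
  assumes "linked X Y"
  shows "linked Y X"
proof -
  obtain v w where "v \<in> X" "w \<in> Y" "{u, v, w} \<in> E" using assms by blast
  moreover have "{u, w, v} = {u, v, w}" by (simp add: insert_commute)
  ultimately have "w \<in> Y" "v \<in> X" "{u, w, v} \<in> E" by simp_all
  then show ?thesis by blast
qed

lemma card_apex_pairs_row:
  "card {p \<in> apex_pairs. fst p \<in> X}
    = pairs_between apex_pairs X A2 + pairs_between apex_pairs X B2 + pairs_between apex_pairs X C2"
proof -
  have "finite apex_pairs"
    using finite_V1 finite_V2 unfolding cross_pairs_def by (auto intro: finite_subset)
  then have "finite {p \<in> apex_pairs. fst p \<in> X}" by simp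
  then have "card {p \<in> apex_pairs. fst p \<in> X}
      = card {p \<in> {p \<in> apex_pairs. fst p \<in> X}. snd p \<in> A2}
        + card {p \<in> {p \<in> apex_pairs. fst p \<in> X}. snd p \<in> B2}
        + card {p \<in> {p \<in> apex_pairs. fst p \<in> X}. snd p \<in> C2}"
    by (rule card_partition3) (use disjoint2 in \<open>auto simp: cross_pairs_def\<close>)
  moreover have "{p \<in> {p \<in> apex_pairs. fst p \<in> X}. snd p \<in> Y} = {p \<in> apex_pairs. fst p \<in> X \<and> snd p \<in> Y}"
    for Y by auto
  ultimately show ?thesis unfolding pairs_between_def by simp
qed

lemma card_apex_pairs_blocks:
  "card apex_pairs = pairs_between apex_pairs A1 A2 + pairs_between apex_pairs A1 B2
    + pairs_between apex_pairs A1 C2 + pairs_between apex_pairs B1 A2 + pairs_between apex_pairs B1 B2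
    + pairs_between apex_pairs B1 C2 + pairs_between apex_pairs C1 A2 + pairs_between apex_pairs C1 B2
    + pairs_between apex_pairs C1 C2"
proof -
  have "finite apex_pairs"
    using finite_V1 finite_V2 unfolding cross_pairs_def by (auto intro: finite_subset)
  then have "card apex_pairs = card {p \<in> apex_pairs. fst p \<in> A1} + card {p \<in> apex_pairs. fst p \<in> B1}
      + card {p \<in> apex_pairs. fst p \<in> C1}"
    by (rule card_partition3) (use disjoint1 in \<open>auto simp: cross_pairs_def\<close>)
  then show ?thesis using card_apex_pairs_row by simp
qed

lemma apex_pairs_block_bounds:
  "pairs_between apex_pairs A1 A2 \<le> a * a" "pairs_between apex_pairs A1 B2 \<le> a * b"
  "pairs_between apex_pairs A1 C2 \<le> a * c" "pairs_between apex_pairs B1 A2 \<le> a * b"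
  "pairs_between apex_pairs B1 B2 \<le> b * b" "pairs_between apex_pairs B1 C2 \<le> b * c"
  "pairs_between apex_pairs C1 A2 \<le> a * c" "pairs_between apex_pairs C1 B2 \<le> b * c"
  "pairs_between apex_pairs C1 C2 \<le> c * c"
  using pairs_between_le[of A1 A2 apex_pairs] pairs_between_le[of A1 B2 apex_pairs]
    pairs_between_le[of A1 C2 apex_pairs] pairs_between_le[of B1 A2 apex_pairs]
    pairs_between_le[of B1 B2 apex_pairs] pairs_between_le[of B1 C2 apex_pairs]
    pairs_between_le[of C1 A2 apex_pairs] pairs_between_le[of C1 B2 apex_pairs]
    pairs_between_le[of C1 C2 apex_pairs]
  by (simp_all add: finite_parts card_parts mult.commute)

lemma apex_pairs_block_empty: "\<not> linked X Y \<Longrightarrow> pairs_between apex_pairs X Y = 0"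
  unfolding pairs_between_def cross_pairs_def by (auto simp: card_eq_0_iff)

lemma linked_avoiding_A:
  assumes "card apex_pairs > a^2 + 2 * a * (b + c)"
  shows "linked B1 B2 \<or> linked B1 C2 \<or> linked C1 B2 \<or> linked C1 C2"
proof (rule ccontr)
  assume "\<not> ?thesis"
  then have "pairs_between apex_pairs B1 B2 = 0" "pairs_between apex_pairs B1 C2 = 0"
    "pairs_between apex_pairs C1 B2 = 0" "pairs_between apex_pairs C1 C2 = 0"
    using apex_pairs_block_empty by blast+
  then have "card apex_pairs \<le> a * a + a * b + a * c + a * b + a * c"
    using card_apex_pairs_blocks apex_pairs_block_bounds by linarith
  then show False using assms by (simp add: power2_eq_square algebra_simps)
qed

lemma linked_meeting_C:
  assumes "card apex_pairs > (a + b)^2"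
  shows "linked A1 C2 \<or> linked B1 C2 \<or> linked C1 A2 \<or> linked C1 B2 \<or> linked C1 C2"
proof (rule ccontr)
  assume "\<not> ?thesis"
  then have "pairs_between apex_pairs A1 C2 = 0" "pairs_between apex_pairs B1 C2 = 0"
    "pairs_between apex_pairs C1 A2 = 0" "pairs_between apex_pairs C1 B2 = 0"
    "pairs_between apex_pairs C1 C2 = 0"
    using apex_pairs_block_empty by blast+
  then have "card apex_pairs \<le> a * a + a * b + a * b + b * b"
    using card_apex_pairs_blocks apex_pairs_block_bounds by linarith
  then show False using assms by (simp add: power2_eq_square algebra_simps)
qed

lemma card_apex_edges: "card {e \<in> E. \<exists>v\<in>V1. \<exists>w\<in>V2. e = {u, v, w}} = card apex_pairs"
proof -
  have inj: "inj_on (\<lambda>p. {u, fst p, snd p}) apex_pairs"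
  proof (rule inj_onI)
    fix p q assume "p \<in> apex_pairs" "q \<in> apex_pairs" "{u, fst p, snd p} = {u, fst q, snd q}"
    then have "fst p = fst q \<and> snd p = snd q"
      using apex_triangle_eq[where X = V1 and Y = V2] disjoint_copies apex
      unfolding cross_pairs_def by auto
    then show "p = q" by (simp add: prod_eq_iff)
  qed
  have "{e \<in> E. \<exists>v\<in>V1. \<exists>w\<in>V2. e = {u, v, w}} = (\<lambda>p. {u, fst p, snd p}) ` apex_pairs"
  proof (intro equalityI subsetI)
    fix e assume "e \<in> {e \<in> E. \<exists>v\<in>V1. \<exists>w\<in>V2. e = {u, v, w}}"
    then obtain v w where vw: "e \<in> E" "v \<in> V1" "w \<in> V2" "e = {u, v, w}" by blast
    then have "(v, w) \<in> apex_pairs" unfolding cross_pairs_def by simp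
    then show "e \<in> (\<lambda>p. {u, fst p, snd p}) ` apex_pairs"
      using vw(4) by (intro image_eqI[where x = "(v, w)"]) auto
  next
    fix e assume "e \<in> (\<lambda>p. {u, fst p, snd p}) ` apex_pairs"
    then obtain p where "p \<in> apex_pairs" "e = {u, fst p, snd p}" by blast
    then have "e \<in> E" "fst p \<in> V1" "snd p \<in> V2" "e = {u, fst p, snd p}" unfolding cross_pairs_def by auto
    then show "e \<in> {e \<in> E. \<exists>v\<in>V1. \<exists>w\<in>V2. e = {u, v, w}}" by blast
  qed
  then show ?thesis using card_image[OF inj] by simp
qed

lemma swap_AB_copy1: "a = b \<Longrightarrow> two_copies a b c B1 A1 C1 A2 B2 C2 u E"
  using finite_parts card_parts disjoint1 disjoint2 disjoint_copies apex sizes edges copies_in_E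
    complete3partite_swap12[of B1 A1 C1]
  by unfold_locales (auto simp: Un_ac)

lemma swap_AB_copy2: "a = b \<Longrightarrow> two_copies a b c A1 B1 C1 B2 A2 C2 u E"
  using finite_parts card_parts disjoint1 disjoint2 disjoint_copies apex sizes edges copies_in_E
    complete3partite_swap12[of B2 A2 C2]
  by unfold_locales (auto simp: Un_ac)

lemma swap_BC_copy1: "b = c \<Longrightarrow> two_copies a b c A1 C1 B1 A2 B2 C2 u E"
  using finite_parts card_parts disjoint1 disjoint2 disjoint_copies apex sizes edges copies_in_E
    complete3partite_swap23[of A1 C1 B1]
  by unfold_locales (auto simp: Un_ac)

lemma swap_BC_copy2: "b = c \<Longrightarrow> two_copies a b c A1 B1 C1 A2 C2 B2 u E"
  using finite_parts card_parts disjoint1 disjoint2 disjoint_copies apex sizes edges copies_in_E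
    complete3partite_swap23[of A2 C2 B2]
  by unfold_locales (auto simp: Un_ac)

lemma has_good_tiling_a_lt_b_lt_c:
  assumes "a < b" "b < c" "card apex_pairs > a^2 + 2 * a * (b + c)" "card apex_pairs > (a + b)^2"
  shows "has_good_tiling a b c (insert u (V1 \<union> V2)) E"
proof -
  interpret swapped: two_copies a b c A2 B2 C2 A1 B1 C1 u E by (rule swap_copies)
  have swap: "has_good_tiling a b c (insert u (V2 \<union> V1)) E \<Longrightarrow> ?thesis" by (simp add: Un_commute)
  have CC: ?thesis if "linked C1 C2" using that has_good_tiling_CC[OF assms(2)] by blast
  have CB: ?thesis if "linked C1 B2" using that has_good_tiling_CB[OF assms(1,2)] by blast
  have BC: ?thesis if "linked B1 C2"
    using linked_swap[OF that] swapped.has_good_tiling_CB[OF assms(1,2)] swap by blast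
  have BB_CA: ?thesis if "linked B1 B2" "linked C1 A2"
    using that has_good_tiling_BB_CA[OF assms(1,2)] by blast
  have BB_AC: ?thesis if "linked B1 B2" "linked A1 C2"
    using linked_swap[OF that(1)] linked_swap[OF that(2)] swapped.has_good_tiling_BB_CA[OF assms(1,2)] swap
    by blast
  show ?thesis
    using linked_avoiding_A[OF assms(3)] linked_meeting_C[OF assms(4)] CC CB BC BB_CA BB_AC by blast
qed

lemma has_good_tiling_b_eq_c_BB:
  assumes "a < b" "b = c" "linked B1 B2" "card apex_pairs > (a + b)^2"
  shows "has_good_tiling a b c (insert u (V1 \<union> V2)) E"
proof -
  interpret swapped: two_copies a b c A2 B2 C2 A1 B1 C1 u E by (rule swap_copies)
  have swap: "has_good_tiling a b c (insert u (V2 \<union> V1)) E \<Longrightarrow> ?thesis" by (simp add: Un_commute)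
  obtain y1 y2 where BB: "y1 \<in> B1" "y2 \<in> B2" "{u, y1, y2} \<in> E" using assms(3) by blast
  then have BB': "{u, y2, y1} \<in> E" by (simp add: insert_commute)
  have AC: ?thesis if "linked A1 C2" using that has_good_tiling_BB_AC[OF assms(1,2) BB] by blast
  have BC: ?thesis if "linked B1 C2" using that has_good_tiling_BB_BC[OF assms(1,2) BB] by blast
  have CA: ?thesis if "linked C1 A2"
    using linked_swap[OF that] swapped.has_good_tiling_BB_AC[OF assms(1,2) BB(2,1) BB'] swap by blast
  have CB: ?thesis if "linked C1 B2"
    using linked_swap[OF that] swapped.has_good_tiling_BB_BC[OF assms(1,2) BB(2,1) BB'] swap by blast
  have CC: ?thesis if "linked C1 C2" using that has_good_tiling_BB_CC[OF assms(1,2) BB] by blast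
  show ?thesis using linked_meeting_C[OF assms(4)] AC BC CA CB CC by blast
qed

lemma has_good_tiling_b_eq_c:
  assumes "a < b" "b = c" "card apex_pairs > a^2 + 2 * a * (b + c)" "card apex_pairs > (a + b)^2"
  shows "has_good_tiling a b c (insert u (V1 \<union> V2)) E"
proof -
  \<comment> \<open>Since \<open>b = c\<close>, the parts B and C of either copy may be exchanged.\<close>
  have BB: ?thesis if "linked B1 B2" by (rule has_good_tiling_b_eq_c_BB[OF assms(1,2) that assms(4)])
  have BC: ?thesis if "linked B1 C2"
  proof -
    interpret T: two_copies a b c A1 B1 C1 A2 C2 B2 u E by (rule swap_BC_copy2[OF assms(2)])
    have "cross_pairs u E V1 (A2 \<union> C2 \<union> B2) = apex_pairs" by (simp add: Un_ac)
    then have "has_good_tiling a b c (insert u (V1 \<union> (A2 \<union> C2 \<union> B2))) E"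
      using T.has_good_tiling_b_eq_c_BB[OF assms(1,2) that] assms(4) by simp
    then show ?thesis by (simp add: Un_ac)
  qed
  have CB: ?thesis if "linked C1 B2"
  proof -
    interpret T: two_copies a b c A1 C1 B1 A2 B2 C2 u E by (rule swap_BC_copy1[OF assms(2)])
    have "cross_pairs u E (A1 \<union> C1 \<union> B1) V2 = apex_pairs" by (simp add: Un_ac)
    then have "has_good_tiling a b c (insert u ((A1 \<union> C1 \<union> B1) \<union> V2)) E"
      using T.has_good_tiling_b_eq_c_BB[OF assms(1,2) that] assms(4) by simp
    then show ?thesis by (simp add: Un_ac)
  qed
  have CC: ?thesis if "linked C1 C2"
  proof -
    interpret T1: two_copies a b c A1 C1 B1 A2 B2 C2 u E by (rule swap_BC_copy1[OF assms(2)])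
    interpret T: two_copies a b c A1 C1 B1 A2 C2 B2 u E by (rule T1.swap_BC_copy2[OF assms(2)])
    have "cross_pairs u E (A1 \<union> C1 \<union> B1) (A2 \<union> C2 \<union> B2) = apex_pairs" by (simp add: Un_ac)
    then have "has_good_tiling a b c (insert u ((A1 \<union> C1 \<union> B1) \<union> (A2 \<union> C2 \<union> B2))) E"
      using T.has_good_tiling_b_eq_c_BB[OF assms(1,2) that] assms(4) by simp
    then show ?thesis by (simp add: Un_ac)
  qed
  show ?thesis using linked_avoiding_A[OF assms(3)] BB BC CB CC by blast
qed

lemma has_good_tiling_a_eq_b_avoiding_AC:
  assumes "a = b" "b < c" "\<not> linked C1 C2" "\<not> linked A1 C2" "\<not> linked C1 A2"
    and "card apex_pairs > a^2 + 2 * a * (b + c)"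
  shows "has_good_tiling a b c (insert u (V1 \<union> V2)) E"
proof -
  have bound: "a^2 + 2 * a * (b + c) = a * a + a * a + a * a + a * c + a * c" "a * a \<le> a * c"
    using assms(1) sizes by (simp_all add: power2_eq_square algebra_simps)
  have products: "a * b = a * a" "b * b = a * a" "b * c = a * c" using assms(1) by simp_all
  have empty: "pairs_between apex_pairs C1 C2 = 0" "pairs_between apex_pairs A1 C2 = 0"
    "pairs_between apex_pairs C1 A2 = 0"
    using apex_pairs_block_empty assms(3-5) by blast+
  have "linked A1 A2" "linked B1 C2" "linked C1 B2"
    using card_apex_pairs_blocks apex_pairs_block_bounds apex_pairs_block_empty[of A1 A2]
      apex_pairs_block_empty[of B1 C2] apex_pairs_block_empty[of C1 B2] empty assms(6) bound products
    by linarith+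
  then show ?thesis using has_good_tiling_AA_BC_CB[OF assms(1,2)] by blast
qed

lemma has_good_tiling_a_eq_b_avoiding_C_links:
  assumes "a = b" "b < c" "\<not> linked C1 C2" "\<not> linked A1 C2 \<or> \<not> linked B1 C2"
    "\<not> linked C1 A2 \<or> \<not> linked C1 B2" "card apex_pairs > a^2 + 2 * a * (b + c)"
  shows "has_good_tiling a b c (insert u (V1 \<union> V2)) E"
proof -
  \<comment> \<open>Since \<open>a = b\<close>, the parts A and B of either copy may be exchanged.\<close>
  have AC_CA: ?thesis if "\<not> linked A1 C2" "\<not> linked C1 A2"
    using has_good_tiling_a_eq_b_avoiding_AC[OF assms(1,2,3) that assms(6)] .
  have BC_CA: ?thesis if "\<not> linked B1 C2" "\<not> linked C1 A2"
  proof -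
    interpret T: two_copies a b c B1 A1 C1 A2 B2 C2 u E by (rule swap_AB_copy1[OF assms(1)])
    have "cross_pairs u E (B1 \<union> A1 \<union> C1) V2 = apex_pairs" by (simp add: Un_ac)
    then have "has_good_tiling a b c (insert u ((B1 \<union> A1 \<union> C1) \<union> V2)) E"
      using T.has_good_tiling_a_eq_b_avoiding_AC[OF assms(1,2,3) that] assms(6) by simp
    then show ?thesis by (simp add: Un_ac)
  qed
  have AC_CB: ?thesis if "\<not> linked A1 C2" "\<not> linked C1 B2"
  proof -
    interpret T: two_copies a b c A1 B1 C1 B2 A2 C2 u E by (rule swap_AB_copy2[OF assms(1)])
    have "cross_pairs u E V1 (B2 \<union> A2 \<union> C2) = apex_pairs" by (simp add: Un_ac)
    then have "has_good_tiling a b c (insert u (V1 \<union> (B2 \<union> A2 \<union> C2))) E"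
      using T.has_good_tiling_a_eq_b_avoiding_AC[OF assms(1,2,3) that] assms(6) by simp
    then show ?thesis by (simp add: Un_ac)
  qed
  have BC_CB: ?thesis if "\<not> linked B1 C2" "\<not> linked C1 B2"
  proof -
    interpret T1: two_copies a b c B1 A1 C1 A2 B2 C2 u E by (rule swap_AB_copy1[OF assms(1)])
    interpret T: two_copies a b c B1 A1 C1 B2 A2 C2 u E by (rule T1.swap_AB_copy2[OF assms(1)])
    have "cross_pairs u E (B1 \<union> A1 \<union> C1) (B2 \<union> A2 \<union> C2) = apex_pairs" by (simp add: Un_ac)
    then have "has_good_tiling a b c (insert u ((B1 \<union> A1 \<union> C1) \<union> (B2 \<union> A2 \<union> C2))) E"
      using T.has_good_tiling_a_eq_b_avoiding_AC[OF assms(1,2,3) that] assms(6) by simp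
    then show ?thesis by (simp add: Un_ac)
  qed
  show ?thesis using assms(4,5) AC_CA BC_CA AC_CB BC_CB by blast
qed

lemma has_good_tiling_a_eq_b:
  assumes "a = b" "b < c" "card apex_pairs > a^2 + 2 * a * (b + c)"
  shows "has_good_tiling a b c (insert u (V1 \<union> V2)) E"
proof -
  interpret swapped: two_copies a b c A2 B2 C2 A1 B1 C1 u E by (rule swap_copies)
  have CC: ?thesis if "linked C1 C2" using that has_good_tiling_CC[OF assms(2)] by blast
  have AC_BC: ?thesis if "linked A1 C2" "linked B1 C2"
    using that has_good_tiling_AC_BC[OF assms(1,2)] by blast
  have CA_CB: ?thesis if "linked C1 A2" "linked C1 B2"
  proof -
    have "has_good_tiling a b c (insert u (V2 \<union> V1)) E"
      using linked_swap[OF that(1)] linked_swap[OF that(2)] swapped.has_good_tiling_AC_BC[OF assms(1,2)]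
      by blast
    then show ?thesis by (simp add: Un_commute)
  qed
  show ?thesis
    using CC AC_BC CA_CB has_good_tiling_a_eq_b_avoiding_C_links[OF assms(1,2) _ _ _ assms(3)] by blast
qed

lemma has_good_tiling_if_many_apex_pairs:
  assumes "card apex_pairs > a^2 + 2 * a * (b + c)" "card apex_pairs > (a + b)^2"
  shows "has_good_tiling a b c (insert u (V1 \<union> V2)) E"
proof -
  consider "a < b" "b < c" | "a = b" "b < c" | "a < b" "b = c" using sizes by linarith
  then show ?thesis
    using has_good_tiling_a_lt_b_lt_c has_good_tiling_a_eq_b has_good_tiling_b_eq_c assms by cases blast+
qed

end

theorem proposition4p7:
  fixes a b c :: nat and u :: 'v and V1 V2 :: "'v set" and E1 E2 E :: "'v set set"
  assumes "1 \<le> a" and "a \<le> b" and "b \<le> c" and "a < c"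
    and "is_copy_K a b c V1 E1" and "is_copy_K a b c V2 E2"
    and "V1 \<inter> V2 = {}" and "u \<notin> V1 \<union> V2"
    and "in_L2 a b c V1 E1 V2 E2 u E"
  shows "\<exists>h. frac_hom_tiling a b c (insert u (V1 \<union> V2)) E h \<and>
             tiling_weight (insert u (V1 \<union> V2)) E h
               \<ge> 2 * real (a + b + c) + 1 / (real a * real b * real c ^ 2) \<and>
             tiling_hmin (insert u (V1 \<union> V2)) E h \<ge> 1 / (real b * real c ^ 2)"
proof -
  obtain A1 B1 C1 A2 B2 C2 where
    copy1: "finite A1" "finite B1" "finite C1" "card A1 = a" "card B1 = b" "card C1 = c"
      "A1 \<inter> B1 = {}" "A1 \<inter> C1 = {}" "B1 \<inter> C1 = {}" "V1 = A1 \<union> B1 \<union> C1" "E1 = complete3partite A1 B1 C1"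
    and copy2: "finite A2" "finite B2" "finite C2" "card A2 = a" "card B2 = b" "card C2 = c"
      "A2 \<inter> B2 = {}" "A2 \<inter> C2 = {}" "B2 \<inter> C2 = {}" "V2 = A2 \<union> B2 \<union> C2" "E2 = complete3partite A2 B2 C2"
    using assms(5,6) unfolding is_copy_K_def by metis
  have L: "E \<subseteq> {e. e \<subseteq> insert u (V1 \<union> V2) \<and> card e = 3}" "E1 \<union> E2 \<subseteq> E"
    "card {e \<in> E. \<exists>v\<in>V1. \<exists>w\<in>V2. e = {u, v, w}} > max (a^2 + 2 * a * (b + c)) ((a + b)^2)"
    using assms(9) unfolding in_L2_def by auto
  interpret two_copies a b c A1 B1 C1 A2 B2 C2 u E
    using copy1 copy2 assms(1-4,7,8) L(1,2) by unfold_locales auto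
  have "has_good_tiling a b c (insert u (V1 \<union> V2)) E"
    using has_good_tiling_if_many_apex_pairs L(3) card_apex_edges copy1(10) copy2(10) by simp
  then show ?thesis unfolding has_good_tiling_def .
qed

end
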